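(* Let $0<\varepsilon\le1$, $c=\sqrt{2\pi}\,\varepsilon/20$, let $\beta$ be a sufficiently large absolute constant, $\lambda=\max\{c^{-2},\beta^2\}$, and $d=np\ge\lambda n^{1/2}$. There exists a constant $\xi>0$ (independent of $\varepsilon$) such that for all sufficiently large $n$ the following holds. Let $v\in V_n$, let $\sigma_0\in\{-1,+1\}^{V_n}$ be any configuration with $\sum_{u\in V_n}\sigma_0(u)=\varphi(2c\sqrt n)$, and let $\Gamma\subseteq V_n\setminus\{v\}$ satisfy $\bigl||\Gamma|-d\bigr|\le d^{2/3}$. Then $$\mathbb{E}\bigl[X_2(v)\mid S_0=\sigma_0,\ N(v)=\Gamma\bigr]\ge\frac{|\Gamma|}{2}+\frac{\xi c}{7}\Bigl(\frac{d^3}{n}\Bigr)^{1/2},$$ where $X_2(v)=\sum_{u\in N(v)}\mathbf 1(S_1(u)=+1)$.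
   Context: $G(n,p)$ is the binomial random graph on $V_n=\{1,\dots,n\}$ and $N(v)$ denotes the neighbourhood of $v$ in it. Majority dynamics: $S_{t+1}(u)=\operatorname{sgn}(\sum_{w\in N(u)}S_t(w))$ if the sum is nonzero, else $S_{t+1}(u)=S_t(u)$. Here $S_0=\sigma_0$ denotes that the initial states are the fixed configuration $\sigma_0$; the randomness is that of the graph. $\varphi(x)=\min\{k\in\mathbb Z:k\ge x,\ k\equiv n\pmod 2\}$. *)

theory Defs
  imports Complex_Main
begin

definition Vn :: "nat \<Rightarrow> nat set" where
  "Vn n = {1..n}"

definition pairs :: "nat \<Rightarrow> nat set set" where
  "pairs n = {e. \<exists>u w. u \<in> Vn n \<and> w \<in> Vn n \<and> u \<noteq> w \<and> e = {u, w}}"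

definition graphs :: "nat \<Rightarrow> nat set set set" where
  "graphs n = Pow (pairs n)"

definition gnp_prob :: "nat \<Rightarrow> real \<Rightarrow> nat set set \<Rightarrow> real" where
  "gnp_prob n p E = p ^ card E * (1 - p) ^ (card (pairs n) - card E)"

definition nbhd :: "nat set set \<Rightarrow> nat \<Rightarrow> nat set" where
  "nbhd E u = {w. {u, w} \<in> E}"

definition maj_step :: "nat set set \<Rightarrow> (nat \<Rightarrow> int) \<Rightarrow> (nat \<Rightarrow> int)" where
  "maj_step E \<sigma> u = (let s = (\<Sum>w\<in>nbhd E u. \<sigma> w) in
      if s \<noteq> 0 then sgn s else \<sigma> u)"

definition state :: "nat set set \<Rightarrow> (nat \<Rightarrow> int) \<Rightarrow> nat \<Rightarrow> (nat \<Rightarrow> int)" where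
  "state E \<sigma>0 t = (maj_step E ^^ t) \<sigma>0"

definition X2 :: "nat set set \<Rightarrow> (nat \<Rightarrow> int) \<Rightarrow> nat \<Rightarrow> real" where
  "X2 E \<sigma>0 v = real (card {u \<in> nbhd E v. state E \<sigma>0 1 u = 1})"

definition gnp_P :: "nat \<Rightarrow> real \<Rightarrow> (nat set set \<Rightarrow> bool) \<Rightarrow> real" where
  "gnp_P n p A = (\<Sum>E\<in>{E\<in>graphs n. A E}. gnp_prob n p E)"

definition gnp_cond_exp :: "nat \<Rightarrow> real \<Rightarrow> (nat set set \<Rightarrow> real) \<Rightarrow> (nat set set \<Rightarrow> bool) \<Rightarrow> real" where
  "gnp_cond_exp n p f A =
     (\<Sum>E\<in>{E\<in>graphs n. A E}. gnp_prob n p E * f E) / gnp_P n p A"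

definition phi :: "nat \<Rightarrow> real \<Rightarrow> int" where
  "phi n x = (THE k::int. real_of_int k \<ge> x \<and> k mod 2 = int n mod 2 \<and>
      (\<forall>j::int. real_of_int j \<ge> x \<and> j mod 2 = int n mod 2 \<longrightarrow> k \<le> j))"

end

(*
  Condition on N(v) = Gamma and fix u in Gamma. The edges from u to the vertices
  other than u and v are independent of N(v), and u switches to +1 as soon as its
  neighbours among them carry at least two more + than - spins, whatever the spin
  of v. With P and M the numbers of + and - vertices off {u, v}, the initial bias
  gives m = P - M >= c sqrt n, and E[X2(v)] is at least the sum over u in Gamma of
  P(X >= Y + 2), where X ~ Bin(M + m, p) and Y ~ Bin(M, p) are independent.

  Adding the m extra vertices one at a time, P(X >= Y + 2) equals
  P(X' >= Y + 2) + p * sum_{h<m} P(X_h = Y + 1) with X' ~ Bin(M, p) and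
  X_h ~ Bin(M + h, p). The first term is at least 1/2 - 12/sigma by symmetry,
  because the binomial pmf is at most 8/sigma; every increment is at least
  const/sigma, because the pmf is at least exp(-60)/(7 sigma) within four standard
  deviations of the mean. The first min(m, sigma/p) increments thus give a gain of
  order c sqrt p. If sigma is small, the bias forces p close to 1, and Markov's
  inequality for the number of missing edges gives P(X >= Y + 2) >= 3/4. Finally
  |Gamma| >= d/2 and sqrt(d^3/n) = d sqrt p.
*)
theory Submission
  imports Defs
begin

section \<open>Binomial distributions\<close>

definition bin_pmf :: "real \<Rightarrow> nat \<Rightarrow> nat \<Rightarrow> real" where
  "bin_pmf p N i = real (N choose i) * p ^ i * (1 - p) ^ (N - i)"

definition bin_exp :: "real \<Rightarrow> nat \<Rightarrow> (nat \<Rightarrow> real) \<Rightarrow> real" where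
  "bin_exp p N f = (\<Sum>i\<le>N. bin_pmf p N i * f i)"

definition bin_sd :: "real \<Rightarrow> nat \<Rightarrow> real" where
  "bin_sd p N = sqrt (real N * p * (1 - p))"

lemma bin_pmf_0_Suc: "bin_pmf p (Suc N) 0 = (1 - p) * bin_pmf p N 0"
  by (simp add: bin_pmf_def)

lemma bin_pmf_Suc_Suc: "bin_pmf p (Suc N) (Suc k) = p * bin_pmf p N k + (1 - p) * bin_pmf p N (Suc k)"
proof (cases "k < N")
  case True
  have e: "(1 - p) ^ (N - k) = (1 - p) * (1 - p) ^ (N - Suc k)"
    using True by (metis Suc_diff_Suc power_Suc)
  show ?thesis unfolding bin_pmf_def using True by (simp add: e algebra_simps)
next
  case False
  then show ?thesis unfolding bin_pmf_def by (simp add: algebra_simps)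
qed

lemma bin_pmf_eq_0: "N < i \<Longrightarrow> bin_pmf p N i = 0"
  by (simp add: bin_pmf_def)

lemma bin_pmf_nonneg: "0 \<le> p \<Longrightarrow> p \<le> 1 \<Longrightarrow> 0 \<le> bin_pmf p N i"
  by (simp add: bin_pmf_def)

lemma bin_pmf_mirror: "i \<le> N \<Longrightarrow> bin_pmf (1 - p) N (N - i) = bin_pmf p N i"
  by (simp add: bin_pmf_def binomial_symmetric[symmetric])

lemma bin_sd_mirror: "bin_sd (1 - p) N = bin_sd p N"
  by (simp add: bin_sd_def algebra_simps)

lemma bin_sd_nonneg: "0 \<le> p \<Longrightarrow> p \<le> 1 \<Longrightarrow> 0 \<le> bin_sd p N"
  by (simp add: bin_sd_def)

lemma bin_sd_sq: "0 \<le> p \<Longrightarrow> p \<le> 1 \<Longrightarrow> (bin_sd p N)\<^sup>2 = real N * p * (1 - p)"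
  by (simp add: bin_sd_def)

lemma bin_sd_sq_le:
  assumes "0 \<le> p" "p \<le> 1"
  shows "(bin_sd p N)\<^sup>2 \<le> real N * p" "(bin_sd p N)\<^sup>2 \<le> real N * (1 - p)"
proof -
  have "real N * p * (1 - p) \<le> real N * p" "real N * (1 - p) * p \<le> real N * (1 - p)"
    using assms by (simp_all add: mult_left_le)
  then show "(bin_sd p N)\<^sup>2 \<le> real N * p" "(bin_sd p N)\<^sup>2 \<le> real N * (1 - p)"
    using assms by (simp_all add: bin_sd_sq mult_ac)
qed

lemma bin_sd_mono: "0 \<le> p \<Longrightarrow> p \<le> 1 \<Longrightarrow> M \<le> N \<Longrightarrow> bin_sd p M \<le> bin_sd p N"
  unfolding bin_sd_def by (intro real_sqrt_le_mono mult_right_mono) simp_all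

lemma bin_sd_le_double:
  assumes "0 \<le> p" "p \<le> 1" "N \<le> 4 * M"
  shows "bin_sd p N \<le> 2 * bin_sd p M"
proof -
  have "real (4 * M) * p * (1 - p) = 4 * (real M * p * (1 - p))" by simp
  then have "bin_sd p (4 * M) = sqrt 4 * bin_sd p M"
    unfolding bin_sd_def by (simp only: real_sqrt_mult)
  moreover have "bin_sd p N \<le> bin_sd p (4 * M)" using assms by (rule bin_sd_mono)
  ultimately show ?thesis by simp
qed

lemma bin_exp_Suc: "bin_exp p (Suc N) f = p * bin_exp p N (\<lambda>i. f (Suc i)) + (1 - p) * bin_exp p N f"
proof -
  define S where "S = (\<Sum>k\<le>N. bin_pmf p N (Suc k) * f (Suc k))"
  have "bin_exp p (Suc N) f = bin_pmf p (Suc N) 0 * f 0 + (\<Sum>k\<le>N. bin_pmf p (Suc N) (Suc k) * f (Suc k))"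
    unfolding bin_exp_def by (rule sum.atMost_Suc_shift)
  also have "(\<Sum>k\<le>N. bin_pmf p (Suc N) (Suc k) * f (Suc k))
      = (\<Sum>k\<le>N. p * (bin_pmf p N k * f (Suc k)) + (1 - p) * (bin_pmf p N (Suc k) * f (Suc k)))"
    by (rule sum.cong) (simp_all add: bin_pmf_Suc_Suc algebra_simps)
  also have "\<dots> = p * bin_exp p N (\<lambda>i. f (Suc i)) + (1 - p) * S"
    unfolding bin_exp_def S_def by (simp add: sum.distrib sum_distrib_left)
  also have "bin_exp p N f = bin_pmf p N 0 * f 0 + S"
    unfolding bin_exp_def S_def
    by (subst sum.atMost_Suc_shift[symmetric]) (simp add: bin_pmf_eq_0)
  ultimately show ?thesis by (simp add: bin_pmf_0_Suc algebra_simps)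
qed

lemma bin_exp_add: "bin_exp p N (\<lambda>i. f i + g i) = bin_exp p N f + bin_exp p N g"
  unfolding bin_exp_def by (simp add: sum.distrib algebra_simps)

lemma bin_exp_cmult: "bin_exp p N (\<lambda>i. c * f i) = c * bin_exp p N f"
  unfolding bin_exp_def by (simp add: sum_distrib_left algebra_simps)

lemma bin_exp_diff: "bin_exp p N (\<lambda>i. f i - g i) = bin_exp p N f - bin_exp p N g"
  unfolding bin_exp_def by (simp add: sum_subtractf algebra_simps)

lemma bin_exp_mono:
  "0 \<le> p \<Longrightarrow> p \<le> 1 \<Longrightarrow> (\<And>i. i \<le> N \<Longrightarrow> f i \<le> g i) \<Longrightarrow> bin_exp p N f \<le> bin_exp p N g"
  unfolding bin_exp_def by (intro sum_mono mult_left_mono) (auto simp: bin_pmf_nonneg)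

lemma bin_exp_nonneg: "0 \<le> p \<Longrightarrow> p \<le> 1 \<Longrightarrow> (\<And>i. i \<le> N \<Longrightarrow> 0 \<le> f i) \<Longrightarrow> 0 \<le> bin_exp p N f"
  using bin_exp_mono[of p N "\<lambda>_. 0" f] by (simp add: bin_exp_def)

lemma bin_exp_const [simp]: "bin_exp p N (\<lambda>_. c) = c"
  by (induction N) (simp_all add: bin_exp_Suc algebra_simps, simp add: bin_exp_def bin_pmf_def)

lemma bin_exp_mean: "bin_exp p N real = real N * p"
proof (induction N)
  case (Suc N)
  then show ?case
    using bin_exp_add[of p N real "\<lambda>_. 1"] by (simp add: bin_exp_Suc algebra_simps)
qed (simp add: bin_exp_def bin_pmf_def)

lemma bin_exp_square: "bin_exp p N (\<lambda>i. (real i)\<^sup>2) = real N * p * (1 - p) + (real N * p)\<^sup>2"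
proof (induction N)
  case (Suc N)
  have "bin_exp p N (\<lambda>i. (real (Suc i))\<^sup>2) = bin_exp p N (\<lambda>i. (real i)\<^sup>2 + (2 * real i + 1))"
    by (simp add: power2_eq_square algebra_simps)
  also have "\<dots> = bin_exp p N (\<lambda>i. (real i)\<^sup>2) + (2 * (real N * p) + 1)"
    by (simp add: bin_exp_add bin_exp_cmult bin_exp_mean)
  finally show ?case using Suc by (simp add: bin_exp_Suc power2_eq_square algebra_simps)
qed (simp add: bin_exp_def bin_pmf_def)

lemma bin_exp_variance: "bin_exp p N (\<lambda>i. (real i - real N * p)\<^sup>2) = real N * p * (1 - p)"
proof -
  have "bin_exp p N (\<lambda>i. (real i - real N * p)\<^sup>2)
      = bin_exp p N (\<lambda>i. (real i)\<^sup>2 + ((-2 * (real N * p)) * real i + (real N * p)\<^sup>2))"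
    by (simp add: power2_eq_square algebra_simps)
  also have "\<dots> = bin_exp p N (\<lambda>i. (real i)\<^sup>2)
      + (bin_exp p N (\<lambda>i. (-2 * (real N * p)) * real i) + (real N * p)\<^sup>2)"
    by (simp only: bin_exp_add bin_exp_const)
  also have "\<dots> = real N * p * (1 - p)"
    by (simp only: bin_exp_cmult bin_exp_mean bin_exp_square) (simp add: power2_eq_square algebra_simps)
  finally show ?thesis .
qed

lemma bin_exp_concentration:
  assumes p: "0 \<le> p" "p \<le> 1" and sd: "0 < bin_sd p N"
  shows "3/4 \<le> bin_exp p N (\<lambda>i. if \<bar>real i - real N * p\<bar> \<le> 2 * bin_sd p N then 1 else 0)"
proof -
  define \<sigma> where "\<sigma> = bin_sd p N"
  have "bin_exp p N (\<lambda>i. if \<bar>real i - real N * p\<bar> \<le> 2 * \<sigma> then 0 else 1)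
      \<le> bin_exp p N (\<lambda>i. (real i - real N * p)\<^sup>2 / (2 * \<sigma>)\<^sup>2)"
  proof (rule bin_exp_mono[OF p])
    fix i
    have "\<bar>real i - real N * p\<bar> > 2 * \<sigma> \<Longrightarrow> (2 * \<sigma>)\<^sup>2 \<le> (real i - real N * p)\<^sup>2"
      using sd unfolding \<sigma>_def
      by (metis abs_le_square_iff abs_of_pos less_imp_le zero_less_mult_iff zero_less_numeral)
    then show "(if \<bar>real i - real N * p\<bar> \<le> 2 * \<sigma> then 0 else 1) \<le> (real i - real N * p)\<^sup>2 / (2 * \<sigma>)\<^sup>2"
      using sd unfolding \<sigma>_def by auto
  qed
  also have "\<dots> = bin_exp p N (\<lambda>i. (real i - real N * p)\<^sup>2) / (2 * \<sigma>)\<^sup>2"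
    using bin_exp_cmult[of p N "1 / (2 * \<sigma>)\<^sup>2" "\<lambda>i. (real i - real N * p)\<^sup>2"] by simp
  also have "\<dots> = 1/4"
  proof -
    define v where "v = real N * p * (1 - p)"
    have "(2 * \<sigma>)\<^sup>2 = 4 * v" unfolding \<sigma>_def v_def by (simp add: power_mult_distrib bin_sd_sq p)
    moreover have "0 < v" using sd unfolding v_def bin_sd_def by simp
    ultimately show ?thesis unfolding bin_exp_variance v_def[symmetric] by simp
  qed
  finally have "bin_exp p N (\<lambda>i. if \<bar>real i - real N * p\<bar> \<le> 2 * \<sigma> then 0 else 1) \<le> 1/4" .
  moreover have "bin_exp p N (\<lambda>i. if \<bar>real i - real N * p\<bar> \<le> 2 * \<sigma> then 1 else 0)
      = 1 - bin_exp p N (\<lambda>i. if \<bar>real i - real N * p\<bar> \<le> 2 * \<sigma> then 0 else 1)"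
    using bin_exp_diff[of p N "\<lambda>_. 1" "\<lambda>i. if \<bar>real i - real N * p\<bar> \<le> 2 * \<sigma> then 0 else 1"]
    by (simp add: if_distrib cong: if_cong)
  ultimately show ?thesis unfolding \<sigma>_def by linarith
qed

section \<open>Local estimates for the binomial pmf\<close>

lemma bin_pmf_sum_le_1:
  assumes "0 \<le> p" "p \<le> 1" "A \<subseteq> {..N}"
  shows "sum (bin_pmf p N) A \<le> 1"
proof -
  have "sum (bin_pmf p N) A \<le> sum (bin_pmf p N) {..N}"
    using assms by (intro sum_mono2) (auto simp: bin_pmf_nonneg)
  also have "\<dots> = bin_exp p N (\<lambda>_. 1)" unfolding bin_exp_def by simp
  finally show ?thesis by simp
qed

lemma bin_pmf_Suc_ratio:
  assumes "i < N"
  shows "bin_pmf p N (Suc i) * (real (Suc i) * (1 - p)) = bin_pmf p N i * (real (N - i) * p)"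
proof -
  have c: "real (Suc i) * real (N choose Suc i) = real (N - i) * real (N choose i)"
    by (metis binomial_absorb_comp binomial_absorption of_nat_mult)
  have e: "(1 - p) ^ (N - i) = (1 - p) ^ (N - Suc i) * (1 - p)"
    using assms by (metis Suc_diff_Suc power_Suc mult.commute)
  have "bin_pmf p N (Suc i) * (real (Suc i) * (1 - p)) =
     (real (Suc i) * real (N choose Suc i)) * p ^ Suc i * ((1 - p) ^ (N - Suc i) * (1 - p))"
    unfolding bin_pmf_def by (simp add: algebra_simps)
  also have "\<dots> = bin_pmf p N i * (real (N - i) * p)"
    unfolding c e[symmetric] bin_pmf_def by (simp add: algebra_simps)
  finally show ?thesis .
qed

lemma bin_pmf_ratio_up:
  assumes p: "0 \<le> p" "p \<le> 1" and K: "0 \<le> K" and i: "i < N" "real i \<le> real N * p + K"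
    and sd: "0 < bin_sd p N"
  shows "(1 - (K + 1) / (bin_sd p N)\<^sup>2) * bin_pmf p N i \<le> bin_pmf p N (Suc i)"
proof -
  define v where "v = (bin_sd p N)\<^sup>2"
  define B where "B = bin_pmf p N i"
  define B' where "B' = bin_pmf p N (Suc i)"
  define X where "X = v + (K + 1) * (1 - p)"
  define Y where "Y = v - K * p"
  have v: "v = real N * p * (1 - p)" "0 < v"
    unfolding v_def using sd by (simp add: bin_sd_sq p, simp)
  have B: "0 \<le> B" "0 \<le> B'" unfolding B_def B'_def using p by (simp_all add: bin_pmf_nonneg)
  have X: "0 < X" "real (Suc i) * (1 - p) \<le> X"
    using v K p i(2) mult_right_mono[of "real (Suc i)" "real N * p + K + 1" "1 - p"]
    unfolding X_def by (simp add: add_pos_nonneg, simp add: algebra_simps)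
  have Y: "Y \<le> real (N - i) * p"
    using v p i mult_right_mono[of "real N * (1 - p) - K" "real (N - i)" p]
    unfolding Y_def by (simp add: of_nat_diff algebra_simps)
  have "B * Y \<le> B' * X"
    using bin_pmf_Suc_ratio[OF i(1), of p] mult_left_mono[OF X(2) B(2)] mult_left_mono[OF Y B(1)]
    unfolding B_def B'_def by linarith
  moreover have "(v - (K + 1)) * X \<le> Y * v"
  proof -
    have "Y * v - (v - (K + 1)) * X = v * p + (K + 1) * (K + 1) * (1 - p)"
      unfolding X_def Y_def by (simp add: algebra_simps)
    moreover have "0 \<le> v * p + (K + 1) * (K + 1) * (1 - p)" using p K v by simp
    ultimately show ?thesis by linarith
  qed
  ultimately have "B * (v - (K + 1)) * X \<le> B' * v * X"
    using B v mult_left_mono[of "(v - (K + 1)) * X" "Y * v" B] mult_right_mono[of "B * Y" "B' * X" v]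
    by (simp add: mult_ac)
  then have "B * (v - (K + 1)) \<le> B' * v" using X by simp
  have "(1 - (K + 1) / v) * B = B * (v - (K + 1)) / v" using v(2) by (simp add: field_simps)
  also have "\<dots> \<le> B' * v / v"
    using v(2) \<open>B * (v - (K + 1)) \<le> B' * v\<close> by (intro divide_right_mono) auto
  also have "\<dots> = B'" using v(2) by simp
  finally show ?thesis unfolding B_def B'_def v_def .
qed

lemma mult_chain_le:
  fixes f :: "nat \<Rightarrow> real"
  assumes r: "0 \<le> r" and ij: "i \<le> j" and step: "\<And>k. i \<le> k \<Longrightarrow> k < j \<Longrightarrow> r * f k \<le> f (Suc k)"
  shows "r ^ (j - i) * f i \<le> f j"
  using ij
proof (induction j rule: dec_induct)
  case (step k)
  have "r ^ (Suc k - i) * f i = r * (r ^ (k - i) * f i)"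
    using step.hyps(1) by (simp add: Suc_diff_le)
  also have "\<dots> \<le> r * f k" using step.IH r by (rule mult_left_mono)
  also have "\<dots> \<le> f (Suc k)" using assms(3) step.hyps by simp
  finally show ?case .
qed simp

lemma bin_pmf_chain_up:
  assumes p: "0 \<le> p" "p \<le> 1" and K: "0 \<le> K" "K + 1 \<le> (bin_sd p N)\<^sup>2"
    and ij: "i \<le> j" "j \<le> N" "real j \<le> real N * p + K + 1"
  shows "(1 - (K + 1) / (bin_sd p N)\<^sup>2) ^ (j - i) * bin_pmf p N i \<le> bin_pmf p N j"
proof (rule mult_chain_le[OF _ ij(1)])
  have pos: "0 < (bin_sd p N)\<^sup>2" using K by linarith
  then show "0 \<le> 1 - (K + 1) / (bin_sd p N)\<^sup>2" using K by simp
  have "bin_sd p N \<noteq> 0" using pos by auto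
  then have "0 < bin_sd p N" using bin_sd_nonneg[OF p, of N] by linarith
  then show "(1 - (K + 1) / (bin_sd p N)\<^sup>2) * bin_pmf p N k \<le> bin_pmf p N (Suc k)"
    if "i \<le> k" "k < j" for k
    using that ij by (intro bin_pmf_ratio_up[OF p K(1)]) auto
qed

lemma bin_pmf_chain_down:
  assumes p: "0 \<le> p" "p \<le> 1" and K: "0 \<le> K" "K + 1 \<le> (bin_sd p N)\<^sup>2"
    and ij: "i \<le> j" "j \<le> N" "real N * p - K - 1 \<le> real i"
  shows "(1 - (K + 1) / (bin_sd p N)\<^sup>2) ^ (j - i) * bin_pmf p N j \<le> bin_pmf p N i"
proof -
  have "(1 - (K + 1) / (bin_sd (1 - p) N)\<^sup>2) ^ ((N - i) - (N - j)) * bin_pmf (1 - p) N (N - j)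
      \<le> bin_pmf (1 - p) N (N - i)"
    using p K ij by (intro bin_pmf_chain_up) (auto simp: bin_sd_mirror of_nat_diff algebra_simps)
  moreover have "(N - i) - (N - j) = j - i" using ij by simp
  ultimately show ?thesis using ij by (simp add: bin_pmf_mirror bin_sd_mirror)
qed

lemma bin_pmf_le_window_right:
  assumes p: "0 \<le> p" "p \<le> 1" and t: "0 < t" "2 * real t * (real t + 1) \<le> (bin_sd p N)\<^sup>2"
    and j: "real j \<le> real N * p"
  shows "real t * bin_pmf p N j \<le> 2"
proof -
  (* Within t steps up from j the pmf drops at most by the factor 1/2, so t values of at
     least half of bin_pmf p N j fit under the total mass 1. *)
  define r where "r = 1 - (real t + 1) / (bin_sd p N)\<^sup>2"
  have "real t + 1 \<le> 2 * real t * (real t + 1)"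
    using t(1) mult_left_mono[of 1 "2 * real t" "real t + 1"] by (simp add: mult_ac)
  then have t_le: "real t + 1 \<le> (bin_sd p N)\<^sup>2" and sd_pos: "0 < (bin_sd p N)\<^sup>2"
    using t(2) by linarith+
  have r: "0 \<le> r" "r \<le> 1" unfolding r_def using sd_pos t_le by simp_all
  have r_pow: "1/2 \<le> r ^ t"
  proof -
    have "1 + real t * (r - 1) \<le> r ^ t" using r Bernoulli_inequality[of "r - 1" t] by simp
    moreover have "real t * (1 - r) \<le> 1/2"
      using t sd_pos unfolding r_def by (simp add: field_simps)
    ultimately show ?thesis by (simp add: algebra_simps)
  qed
  have "real j + real t \<le> real N"
    using j t_le bin_sd_sq_le(2)[OF p, of N] by (simp add: algebra_simps)
  then have jt: "j + t \<le> N" by linarith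
  have "bin_pmf p N j / 2 \<le> bin_pmf p N i" if "i \<in> {j..<j + t}" for i
  proof -
    have "1/2 \<le> r ^ (i - j)"
      using that r r_pow power_decreasing[of "i - j" t r] by force
    then have "1/2 * bin_pmf p N j \<le> r ^ (i - j) * bin_pmf p N j"
      by (intro mult_right_mono) (auto simp: bin_pmf_nonneg p)
    also have "\<dots> \<le> bin_pmf p N i"
      unfolding r_def using that p t_le jt j by (intro bin_pmf_chain_up) auto
    finally show ?thesis by simp
  qed
  then have "real t * (bin_pmf p N j / 2) \<le> sum (bin_pmf p N) {j..<j + t}"
    using sum_bounded_below[of "{j..<j + t}" "bin_pmf p N j / 2" "bin_pmf p N"] by simp
  also have "\<dots> \<le> 1" using jt by (intro bin_pmf_sum_le_1 p) auto
  finally show ?thesis by simp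
qed

lemma bin_pmf_le_window:
  assumes p: "0 \<le> p" "p \<le> 1" and t: "0 < t" "2 * real t * (real t + 1) \<le> (bin_sd p N)\<^sup>2"
  shows "real t * bin_pmf p N j \<le> 2"
proof (cases "real j \<le> real N * p")
  case True
  then show ?thesis using bin_pmf_le_window_right[OF p t] by simp
next
  case False
  show ?thesis
  proof (cases "j \<le> N")
    case True
    have "real t * bin_pmf (1 - p) N (N - j) \<le> 2"
      using p t False True
      by (intro bin_pmf_le_window_right) (auto simp: bin_sd_mirror of_nat_diff algebra_simps)
    then show ?thesis using True by (simp add: bin_pmf_mirror)
  qed (simp add: bin_pmf_eq_0)
qed

lemma bin_pmf_le:
  assumes p: "0 \<le> p" "p \<le> 1" and sd: "4 \<le> bin_sd p N"
  shows "bin_pmf p N j \<le> 8 / bin_sd p N"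
proof -
  define \<sigma> where "\<sigma> = bin_sd p N"
  define t where "t = nat \<lfloor>\<sigma> / 2\<rfloor>"
  have t: "\<sigma> / 2 - 1 < real t" "real t \<le> \<sigma> / 2" unfolding t_def using sd \<sigma>_def by linarith+
  have "2 * real t * (real t + 1) \<le> 2 * (\<sigma> / 2) * (\<sigma> / 2 + 1)"
    using t sd \<sigma>_def by (intro mult_mono) auto
  also have "\<dots> \<le> \<sigma>\<^sup>2" using sd unfolding \<sigma>_def by (simp add: power2_eq_square field_simps)
  finally have "real t * bin_pmf p N j \<le> 2"
    using t sd unfolding \<sigma>_def by (intro bin_pmf_le_window[OF p]) auto
  then have "bin_pmf p N j \<le> 2 / real t" using t sd \<sigma>_def by (simp add: field_simps)
  also have "\<dots> \<le> 8 / \<sigma>" using t sd \<sigma>_def by (simp add: field_simps)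
  finally show ?thesis unfolding \<sigma>_def .
qed

lemma nat_near_finite_card:
  fixes x r :: real
  assumes "0 \<le> r"
  shows "finite {i::nat. \<bar>real i - x\<bar> \<le> r}" "real (card {i::nat. \<bar>real i - x\<bar> \<le> r}) \<le> 2 * r + 1"
proof -
  define lo where "lo = nat \<lceil>x - r\<rceil>"
  define M where "M = nat \<lfloor>2 * r\<rfloor>"
  have sub: "{i::nat. \<bar>real i - x\<bar> \<le> r} \<subseteq> {lo..<lo + M + 1}"
  proof
    fix i assume "i \<in> {i::nat. \<bar>real i - x\<bar> \<le> r}"
    then have h: "\<bar>real i - x\<bar> \<le> r" by simp
    have "lo \<le> i" unfolding lo_def using h by (simp add: nat_le_iff ceiling_le_iff)
    moreover have "real (i - lo) \<le> 2 * r"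
      using h real_nat_ceiling_ge[of "x - r"] \<open>lo \<le> i\<close> unfolding lo_def by (simp add: of_nat_diff)
    then have "i - lo \<le> M" unfolding M_def using assms by (simp add: le_nat_floor le_floor_iff)
    ultimately show "i \<in> {lo..<lo + M + 1}" by simp
  qed
  then show "finite {i::nat. \<bar>real i - x\<bar> \<le> r}" by (rule finite_subset) simp
  have "real (card {i::nat. \<bar>real i - x\<bar> \<le> r}) \<le> real M + 1"
    using card_mono[OF _ sub] by simp
  moreover have "real M \<le> 2 * r" unfolding M_def using assms by simp
  ultimately show "real (card {i::nat. \<bar>real i - x\<bar> \<le> r}) \<le> 2 * r + 1" by linarith
qed

lemma bin_pmf_large_near_mean:
  assumes p: "0 \<le> p" "p \<le> 1" and sd: "1 \<le> bin_sd p N"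
  obtains i where "\<bar>real i - real N * p\<bar> \<le> 2 * bin_sd p N" "1 / (7 * bin_sd p N) \<le> bin_pmf p N i"
proof (rule ccontr)
  define \<sigma> where "\<sigma> = bin_sd p N"
  define W where "W = {i::nat. \<bar>real i - real N * p\<bar> \<le> 2 * \<sigma>}"
  assume "\<not> thesis"
  with that have small: "bin_pmf p N i \<le> 1 / (7 * \<sigma>)" if "i \<in> W" for i
    using that unfolding W_def \<sigma>_def by force
  have W: "finite W" "real (card W) \<le> 4 * \<sigma> + 1"
    using nat_near_finite_card[of "2 * \<sigma>" "real N * p"] sd unfolding W_def \<sigma>_def by auto
  have "3/4 \<le> bin_exp p N (\<lambda>i. if i \<in> W then 1 else 0)"
    using bin_exp_concentration[OF p] sd unfolding W_def \<sigma>_def by simp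
  also have "\<dots> = sum (bin_pmf p N) (W \<inter> {..N})"
    unfolding bin_exp_def using sum.inter_restrict[of "{..N}" "bin_pmf p N" W]
    by (simp add: Int_commute if_distrib cong: if_cong)
  also have "\<dots> \<le> sum (bin_pmf p N) W" using W by (intro sum_mono2) (auto simp: bin_pmf_nonneg p)
  also have "\<dots> \<le> real (card W) * (1 / (7 * \<sigma>))" using small by (rule sum_bounded_above)
  also have "\<dots> \<le> (4 * \<sigma> + 1) / (7 * \<sigma>)" using W sd \<sigma>_def by (simp add: divide_right_mono)
  finally show False using sd \<sigma>_def by (simp add: field_simps)
qed

lemma exp_le_one_minus_power:
  fixes x :: real
  assumes "0 \<le> x" "x \<le> 1/2"
  shows "exp (- 2 * x * real k) \<le> (1 - x) ^ k"
proof -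
  have "- 2 * x \<le> ln (1 - x)"
    using ln_one_minus_pos_lower_bound[OF assms] assms mult_left_mono[of x "1/2" x]
    by (simp add: power2_eq_square)
  then have "exp (- 2 * x * real k) \<le> exp (real k * ln (1 - x))"
    using mult_left_mono[of "- 2 * x" "ln (1 - x)" "real k"] by (simp add: mult_ac)
  also have "\<dots> = (1 - x) ^ k" using assms by (simp add: exp_of_nat_mult)
  finally show ?thesis .
qed

lemma bin_pmf_ge:
  assumes p: "0 \<le> p" "p \<le> 1" and sd: "10 \<le> bin_sd p N"
    and i: "\<bar>real i - real N * p\<bar> \<le> 4 * bin_sd p N"
  shows "exp (- 60) / (7 * bin_sd p N) \<le> bin_pmf p N i"
proof -
  define \<sigma> where "\<sigma> = bin_sd p N"
  define x where "x = (4 * \<sigma> + 1) / \<sigma>\<^sup>2"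
  have \<sigma>10: "10 \<le> \<sigma>" using sd unfolding \<sigma>_def .
  then have \<sigma>: "10 \<le> \<sigma>" "0 < \<sigma>\<^sup>2" by simp_all
  have "10 * \<sigma> \<le> \<sigma>\<^sup>2" using \<sigma> mult_right_mono[of 10 \<sigma> \<sigma>] by (simp add: power2_eq_square)
  then have K: "0 \<le> 4 * \<sigma>" "4 * \<sigma> + 1 \<le> \<sigma>\<^sup>2" and x: "0 \<le> x" "x \<le> 1/2"
    using \<sigma> unfolding x_def by (simp_all add: pos_divide_le_eq)
  have "1 \<le> bin_sd p N" using sd by simp
  then obtain i0 where i0: "\<bar>real i0 - real N * p\<bar> \<le> 2 * \<sigma>" "1 / (7 * \<sigma>) \<le> bin_pmf p N i0"
    unfolding \<sigma>_def by (rule bin_pmf_large_near_mean[OF p])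
  have "real N * p + real N * (1 - p) = real N" by (simp add: algebra_simps)
  then have N: "i \<le> N" "i0 \<le> N"
    using i i0 K bin_sd_sq_le(2)[OF p, of N] unfolding \<sigma>_def abs_le_iff of_nat_le_iff[symmetric]
    by linarith+
  (* Walk from i0 to i, losing at most the factor 1 - x in each of at most 6 sigma steps. *)
  obtain k where k: "real k \<le> 6 * \<sigma>" "(1 - x) ^ k * bin_pmf p N i0 \<le> bin_pmf p N i"
  proof (cases "i0 \<le> i")
    case True
    have "(1 - x) ^ (i - i0) * bin_pmf p N i0 \<le> bin_pmf p N i"
      using True N i K unfolding x_def \<sigma>_def by (intro bin_pmf_chain_up[OF p]) auto
    moreover have "real (i - i0) \<le> 6 * \<sigma>" using True i i0 unfolding \<sigma>_def by (simp add: of_nat_diff)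
    ultimately show ?thesis by (rule that[rotated])
  next
    case False
    have "(1 - x) ^ (i0 - i) * bin_pmf p N i0 \<le> bin_pmf p N i"
      using False N i K unfolding x_def \<sigma>_def by (intro bin_pmf_chain_down[OF p]) auto
    moreover have "real (i0 - i) \<le> 6 * \<sigma>"
      using False i i0 unfolding \<sigma>_def by (simp add: of_nat_diff)
    ultimately show ?thesis by (rule that[rotated])
  qed
  have "2 * x * real k \<le> 2 * x * (6 * \<sigma>)" using k x by (intro mult_left_mono) auto
  also have "\<dots> = 48 + 12 / \<sigma>" using \<sigma> unfolding x_def by (simp add: field_simps power2_eq_square)
  also have "\<dots> \<le> 60" using \<sigma> by (simp add: field_simps)
  finally have "exp (- 60) \<le> exp (- 2 * x * real k)" by simp
  then have "exp (- 60) \<le> (1 - x) ^ k" using exp_le_one_minus_power[OF x, of k] by linarith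
  then have "exp (- 60) * (1 / (7 * \<sigma>)) \<le> (1 - x) ^ k * bin_pmf p N i0"
    using i0 \<sigma> x by (intro mult_mono) auto
  then show ?thesis using k unfolding \<sigma>_def by simp
qed

section \<open>The probability of a lead of two\<close>

lemma bin_exp_swap: "bin_exp p N (\<lambda>i. bin_exp q M (\<lambda>j. g i j)) = bin_exp q M (\<lambda>j. bin_exp p N (\<lambda>i. g i j))"
  unfolding bin_exp_def by (simp add: sum_distrib_left sum.swap[of _ "{..N}"] mult.left_commute)

lemma bin_exp_indicator: "bin_exp p N (\<lambda>i. if i = k then 1 else 0) = bin_pmf p N k"
  unfolding bin_exp_def by (simp add: if_distrib bin_pmf_eq_0 cong: if_cong)

(* P(X >= Y + 2) for independent X ~ Bin(a, p) and Y ~ Bin(b, p); a lead of two is what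
   survives the unknown spin of v. *)
definition bin_lead2 :: "real \<Rightarrow> nat \<Rightarrow> nat \<Rightarrow> real" where
  "bin_lead2 p a b = bin_exp p a (\<lambda>i. bin_exp p b (\<lambda>j. if j + 2 \<le> i then 1 else 0))"

lemma bin_lead2_Suc: "bin_lead2 p (Suc a) b = bin_lead2 p a b + p * bin_exp p b (\<lambda>j. bin_pmf p a (Suc j))"
proof -
  define F where "F i = bin_exp p b (\<lambda>j. if j + 2 \<le> i then 1 else 0)" for i
  have F_Suc: "F (Suc i) = F i + bin_exp p b (\<lambda>j. if i = Suc j then 1 else 0)" for i
  proof -
    have "F (Suc i) = bin_exp p b (\<lambda>j. (if j + 2 \<le> i then 1 else 0) + (if i = Suc j then 1 else 0))"
      unfolding F_def by (intro arg_cong[where f="bin_exp p b"]) auto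
    then show ?thesis unfolding F_def by (simp add: bin_exp_add)
  qed
  have "bin_exp p a (\<lambda>i. bin_exp p b (\<lambda>j. if i = Suc j then 1 else 0))
      = bin_exp p b (\<lambda>j. bin_pmf p a (Suc j))"
    by (subst bin_exp_swap) (simp add: bin_exp_indicator)
  then show ?thesis
    unfolding bin_lead2_def F_def[symmetric] bin_exp_Suc[of p a F] F_Suc bin_exp_add
    by (simp add: algebra_simps)
qed

lemma bin_lead2_add:
  "bin_lead2 p (a + m) b = bin_lead2 p a b + p * (\<Sum>h<m. bin_exp p b (\<lambda>j. bin_pmf p (a + h) (Suc j)))"
  by (induction m) (simp_all add: bin_lead2_Suc algebra_simps)

lemma bin_lead2_diag_ge:
  assumes p: "0 \<le> p" "p \<le> 1" and sd: "4 \<le> bin_sd p b"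
  shows "1/2 - 12 / bin_sd p b \<le> bin_lead2 p b b"
proof -
  (* X >= Y + 2 and Y >= X + 2 are equally likely, and |X - Y| <= 1 has probability at
     most 3 * 8 / sigma. *)
  define near where "near i j = (if i \<le> j + 1 \<and> j \<le> i + 1 then 1 else (0::real))" for i j :: nat
  have "bin_lead2 p b b + bin_exp p b (\<lambda>i. bin_exp p b (\<lambda>j. if i + 2 \<le> j then 1 else 0))
      + bin_exp p b (\<lambda>i. bin_exp p b (near i)) = 1"
  proof -
    have "bin_lead2 p b b + bin_exp p b (\<lambda>i. bin_exp p b (\<lambda>j. if i + 2 \<le> j then 1 else 0))
        + bin_exp p b (\<lambda>i. bin_exp p b (near i))
        = bin_exp p b (\<lambda>i. bin_exp p b (\<lambda>j.
            (if j + 2 \<le> i then 1 else 0) + (if i + 2 \<le> j then 1 else 0) + near i j))"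
      unfolding bin_lead2_def by (simp add: bin_exp_add)
    also have "\<dots> = bin_exp p b (\<lambda>i. bin_exp p b (\<lambda>j. 1))"
      unfolding near_def by (intro ext arg_cong[where f="bin_exp p b"]) auto
    finally show ?thesis by simp
  qed
  moreover have "bin_exp p b (\<lambda>i. bin_exp p b (\<lambda>j. if i + 2 \<le> j then 1 else 0)) = bin_lead2 p b b"
    unfolding bin_lead2_def by (rule bin_exp_swap)
  moreover have "bin_exp p b (\<lambda>i. bin_exp p b (near i)) \<le> 24 / bin_sd p b"
  proof -
    have "bin_exp p b (near i) \<le> 24 / bin_sd p b" for i
    proof -
      have "bin_exp p b (near i) \<le> bin_exp p b (\<lambda>j. (if j = i - 1 then 1 else 0)
          + (if j = i then 1 else 0) + (if j = Suc i then 1 else 0))"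
        unfolding near_def by (intro bin_exp_mono p) auto
      also have "\<dots> = bin_pmf p b (i - 1) + bin_pmf p b i + bin_pmf p b (Suc i)"
        by (simp add: bin_exp_add bin_exp_indicator)
      also have "\<dots> \<le> 24 / bin_sd p b"
        using bin_pmf_le[OF p sd, of "i - 1"] bin_pmf_le[OF p sd, of i] bin_pmf_le[OF p sd, of "Suc i"]
        by simp
      finally show ?thesis .
    qed
    then show ?thesis using bin_exp_mono[OF p, of b _ "\<lambda>_. 24 / bin_sd p b"] by simp
  qed
  ultimately show ?thesis by linarith
qed

(* 3/4 is the mass of the window in bin_exp_concentration, exp(-60)/14 the bound of
   bin_pmf_ge for a standard deviation of at most twice the given one. *)
definition tie_const :: real where
  "tie_const = 3/4 * exp (- 60) / 14"

lemma tie_const_pos: "0 < tie_const"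
  by (simp add: tie_const_def)

lemma bin_exp_pmf_Suc_ge:
  assumes p: "0 \<le> p" "p \<le> 1" and sd: "10 \<le> bin_sd p b"
    and h: "real h * p \<le> bin_sd p b" "b + h \<le> 4 * b"
  shows "tie_const / bin_sd p b \<le> bin_exp p b (\<lambda>j. bin_pmf p (b + h) (Suc j))"
proof -
  define \<sigma> where "\<sigma> = bin_sd p b"
  define \<sigma>' where "\<sigma>' = bin_sd p (b + h)"
  have \<sigma>': "\<sigma> \<le> \<sigma>'" "\<sigma>' \<le> 2 * \<sigma>"
    unfolding \<sigma>_def \<sigma>'_def using p h by (simp_all add: bin_sd_mono bin_sd_le_double)
  have near: "exp (- 60) / (14 * \<sigma>) \<le> bin_pmf p (b + h) (Suc j)"
    if j: "\<bar>real j - real b * p\<bar> \<le> 2 * \<sigma>" for j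
  proof -
    have "real (Suc j) - real (b + h) * p = (real j - real b * p) + (1 - real h * p)"
      by (simp add: algebra_simps)
    then have "\<bar>real (Suc j) - real (b + h) * p\<bar> \<le> \<bar>real j - real b * p\<bar> + \<bar>1 - real h * p\<bar>"
      by (simp only: abs_triangle_ineq)
    also have "\<dots> \<le> \<bar>real j - real b * p\<bar> + 1 + real h * p"
      using p by (simp add: abs_le_iff)
    also have "\<dots> \<le> 4 * \<sigma>'" using j h sd \<sigma>' unfolding \<sigma>_def by linarith
    finally have "exp (- 60) / (7 * \<sigma>') \<le> bin_pmf p (b + h) (Suc j)"
      using bin_pmf_ge[OF p] sd \<sigma>' unfolding \<sigma>_def \<sigma>'_def by simp
    moreover have "exp (- 60) / (14 * \<sigma>) \<le> exp (- 60) / (7 * \<sigma>')"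
      using \<sigma>' sd \<sigma>_def by (intro divide_left_mono) auto
    ultimately show ?thesis by linarith
  qed
  have "tie_const / \<sigma> = exp (- 60) / (14 * \<sigma>) * (3/4)" unfolding tie_const_def by simp
  also have "\<dots> \<le> exp (- 60) / (14 * \<sigma>) * bin_exp p b (\<lambda>j. if \<bar>real j - real b * p\<bar> \<le> 2 * \<sigma> then 1 else 0)"
    using bin_exp_concentration[OF p, of b] sd \<sigma>_def by (intro mult_left_mono) auto
  also have "\<dots> \<le> bin_exp p b (\<lambda>j. bin_pmf p (b + h) (Suc j))"
    unfolding bin_exp_cmult[symmetric] using near by (intro bin_exp_mono p) (auto simp: bin_pmf_nonneg p)
  finally show ?thesis unfolding \<sigma>_def .
qed

lemma bin_lead2_ge_min:
  assumes p: "0 < p" "p \<le> 1" and sd: "10 \<le> bin_sd p b" and m: "m \<le> 3 * b"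
  shows "1/2 - 12 / bin_sd p b + tie_const * min (p * real m) (bin_sd p b) / bin_sd p b
    \<le> bin_lead2 p (b + m) b"
proof -
  (* Each of the first min(m, sigma/p) increments in bin_lead2_add is at least
     tie_const / sigma. *)
  define \<sigma> where "\<sigma> = bin_sd p b"
  define P where "P h = bin_exp p b (\<lambda>j. bin_pmf p (b + h) (Suc j))" for h
  define H where "H = min m (nat \<lfloor>\<sigma> / p\<rfloor> + 1)"
  have p01: "0 \<le> p" "p \<le> 1" using p by simp_all
  have \<sigma>: "10 \<le> \<sigma>" using sd unfolding \<sigma>_def .
  have P_ge: "tie_const / \<sigma> \<le> P h" if "h < H" for h
  proof -
    have "h \<le> nat \<lfloor>\<sigma> / p\<rfloor>" using that unfolding H_def by simp
    moreover have "real (nat \<lfloor>\<sigma> / p\<rfloor>) \<le> \<sigma> / p" using \<sigma> p by (intro of_nat_floor) simp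
    ultimately have "real h \<le> \<sigma> / p" by (meson of_nat_le_iff order_trans)
    then have "real h * p \<le> \<sigma>" using p by (simp add: field_simps)
    moreover have "b + h \<le> 4 * b" using that m unfolding H_def by simp
    ultimately show ?thesis unfolding P_def \<sigma>_def using bin_exp_pmf_Suc_ge[OF p01 sd] by simp
  qed
  have "real H * (tie_const / \<sigma>) \<le> (\<Sum>h<H. P h)"
    using sum_bounded_below[of "{..<H}" "tie_const / \<sigma>" P] P_ge by simp
  also have "\<dots> \<le> (\<Sum>h<m. P h)"
    unfolding P_def H_def by (intro sum_mono2 bin_exp_nonneg p01) (auto simp: bin_pmf_nonneg p01)
  finally have sum_ge: "real H * (tie_const / \<sigma>) \<le> (\<Sum>h<m. P h)" .
  have "min (p * real m) \<sigma> \<le> p * real H"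
  proof (cases "H = m")
    case False
    then have "\<sigma> / p < real H" unfolding H_def by linarith
    then show ?thesis using p by (simp add: field_simps)
  qed simp
  then have "tie_const * min (p * real m) \<sigma> / \<sigma> \<le> p * (real H * (tie_const / \<sigma>))"
    using \<sigma> tie_const_pos by (simp add: divide_right_mono mult_left_mono)
  also have "\<dots> \<le> p * (\<Sum>h<m. P h)" using p by (intro mult_left_mono[OF sum_ge]) simp
  moreover have "1/2 - 12 / \<sigma> \<le> bin_lead2 p b b"
    using bin_lead2_diag_ge[OF p01] \<sigma> unfolding \<sigma>_def by simp
  ultimately show ?thesis using bin_lead2_add[of p b m b] unfolding P_def \<sigma>_def by simp
qed

(* Chosen so that 12 / sigma <= tie_const / 2 once sigma >= sd_threshold. *)
definition sd_threshold :: real where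
  "sd_threshold = 24 / tie_const"

lemma sd_threshold_ge: "10 \<le> sd_threshold"
proof -
  have "tie_const \<le> 3 / 56" unfolding tie_const_def by simp
  then have "24 / (3 / 56) \<le> sd_threshold" unfolding sd_threshold_def
    using tie_const_pos by (intro divide_left_mono) auto
  then show ?thesis by simp
qed

lemma bin_lead2_ge_large_sd:
  fixes p c :: real and b m n :: nat
  assumes p: "0 < p" "p \<le> 1" and c: "0 < c" "c \<le> 1" and bn: "b \<le> n" and m: "m \<le> 3 * b"
    and cm: "c * sqrt (real n) \<le> real m" and pcn: "sd_threshold \<le> p * c * sqrt (real n)"
    and sd: "sd_threshold \<le> bin_sd p b"
  shows "1/2 + tie_const / 2 * c * sqrt p \<le> bin_lead2 p (b + m) b"
proof -
  define \<sigma> where "\<sigma> = bin_sd p b"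
  have \<sigma>: "10 \<le> \<sigma>" using sd sd_threshold_ge unfolding \<sigma>_def by linarith
  have err: "12 / \<sigma> \<le> tie_const / 2"
  proof -
    have "12 / \<sigma> \<le> 12 / sd_threshold"
      using sd \<sigma> \<sigma>_def sd_threshold_ge by (intro divide_left_mono) auto
    then show ?thesis unfolding sd_threshold_def using tie_const_pos by simp
  qed
  have c_sqrt_p: "c * sqrt p \<le> 1" using c p by (simp add: mult_le_one)
  have lower: "1/2 - 12 / \<sigma> + tie_const * min (p * real m) \<sigma> / \<sigma> \<le> bin_lead2 p (b + m) b"
    using bin_lead2_ge_min[OF p \<sigma>[unfolded \<sigma>_def] m] unfolding \<sigma>_def .
  show ?thesis
  proof (cases "p * real m \<le> \<sigma>")
    case True
    have "\<sigma>\<^sup>2 \<le> real n * p"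
      using bin_sd_sq_le(1)[of p b] p bn unfolding \<sigma>_def by (smt (verit) mult_right_mono of_nat_mono)
    then have "\<sigma> \<le> sqrt (real n) * sqrt p"
      using \<sigma> by (metis real_le_rsqrt real_sqrt_mult)
    then have "c * sqrt p * \<sigma> \<le> c * sqrt p * (sqrt (real n) * sqrt p)"
      using c p by (intro mult_left_mono) auto
    also have "\<dots> = p * (c * sqrt (real n))" using p by (simp add: algebra_simps)
    also have "\<dots> \<le> p * real m" using cm p by (simp add: mult_left_mono)
    finally have "tie_const * (c * sqrt p * \<sigma>) \<le> tie_const * (p * real m)"
      using tie_const_pos by simp
    moreover have "24 \<le> tie_const * (p * real m)"
    proof -
      have "p * (c * sqrt (real n)) \<le> p * real m" using cm p by (intro mult_left_mono) auto
      then have "sd_threshold \<le> p * real m" using pcn by (simp add: mult.assoc)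
      then show ?thesis unfolding sd_threshold_def using tie_const_pos by (simp add: field_simps)
    qed
    ultimately have "tie_const / 2 * c * sqrt p \<le> tie_const * min (p * real m) \<sigma> / \<sigma> - 12 / \<sigma>"
      using \<sigma> True by (simp add: field_simps)
    then show ?thesis using lower by linarith
  next
    case False
    then have "tie_const \<le> tie_const * min (p * real m) \<sigma> / \<sigma>" using \<sigma> by simp
    moreover have "tie_const / 2 * c * sqrt p \<le> tie_const / 2"
      using c_sqrt_p tie_const_pos by (simp add: mult.assoc mult_left_le)
    ultimately show ?thesis using lower err by linarith
  qed
qed

lemma bin_lead2_ge_markov:
  assumes p: "0 \<le> p" "p \<le> 1" and m: "2 \<le> m"
  shows "1 - real (b + m) * (1 - p) / (real m - 1) \<le> bin_lead2 p (b + m) b"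
proof -
  define a where "a = b + m"
  define d where "d = real m - 1"
  have m1: "0 < d" using m unfolding d_def by simp
  have "1 - real a * (1 - p) / d = bin_exp p a (\<lambda>i. (1 - real a / d) + 1 / d * real i)"
    using m1 by (simp only: bin_exp_add bin_exp_const bin_exp_cmult bin_exp_mean) (simp add: field_simps)
  also have "\<dots> \<le> bin_exp p a (\<lambda>i. if b + 2 \<le> i then 1 else 0)"
  proof (intro bin_exp_mono p)
    fix i assume "i \<le> a"
    have eq: "1 - real a / d + 1 / d * real i = 1 - (real a - real i) / d"
      using m1 by (simp add: field_simps)
    show "1 - real a / d + 1 / d * real i \<le> (if b + 2 \<le> i then 1 else 0)"
    proof (cases "b + 2 \<le> i")
      case True
      then show ?thesis unfolding eq using m1 \<open>i \<le> a\<close> by simp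
    next
      case False
      then have "1 \<le> (real a - real i) / d"
        using m1 unfolding a_def d_def by (simp add: le_divide_eq)
      then show ?thesis unfolding eq using False by simp
    qed
  qed
  also have "\<dots> \<le> bin_lead2 p a b"
    unfolding bin_lead2_def
    using bin_exp_mono[OF p, of b "\<lambda>_. 1" "\<lambda>j. if j + 2 \<le> i then 1 else 0" for i]
    by (intro bin_exp_mono p) (auto simp: bin_exp_nonneg p)
  finally show ?thesis unfolding a_def d_def .
qed

lemma bin_lead2_ge_small_sd:
  fixes p c :: real and b m n :: nat
  assumes p: "0 < p" "p \<le> 1" and c: "0 < c" "c \<le> 1" and n: "n \<le> 4 * b" "b + m \<le> n"
    and cm: "c * sqrt (real n) \<le> real m" and cn: "32 * sd_threshold\<^sup>2 + 1 \<le> c * sqrt (real n)"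
    and pn: "1 \<le> p * sqrt (real n)" and sd: "bin_sd p b < sd_threshold"
  shows "3/4 \<le> bin_lead2 p (b + m) b"
proof -
  (* The small standard deviation and the bias force p > 1/2 and then
     n (1 - p) < 8 sd_threshold^2, which makes bin_lead2_ge_markov effective. *)
  define T where "T = sd_threshold"
  have p01: "0 \<le> p" "p \<le> 1" using p by simp_all
  have "(bin_sd p b)\<^sup>2 < T\<^sup>2"
    using sd bin_sd_nonneg[OF p01] unfolding T_def by (simp add: power_strict_mono)
  then have var: "real b * (p * (1 - p)) < T\<^sup>2" by (simp add: bin_sd_sq p01 mult.assoc)
  have "c * sqrt (real n) \<le> sqrt (real n)" using c by (simp add: mult_left_le_one_le)
  then have sqrt_n: "32 * T\<^sup>2 + 1 \<le> sqrt (real n)" using cn unfolding T_def by linarith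
  have "sqrt (real n) \<le> real n * p"
    using mult_left_mono[OF pn, of "sqrt (real n)"] by (simp add: algebra_simps)
  moreover have b4: "real n / 4 * (p * (1 - p)) \<le> real b * (p * (1 - p))"
    using n p by (intro mult_right_mono) auto
  ultimately have p_half: "1/2 < p"
  proof (rule_tac ccontr)
    assume "sqrt (real n) \<le> real n * p" and "\<not> 1/2 < p"
    then have "real n / 4 * p * (1/2) \<le> real n / 4 * p * (1 - p)"
      using p by (intro mult_left_mono) auto
    then have "real n * p / 8 \<le> real n / 4 * (p * (1 - p))" by (simp add: mult.assoc)
    then show False using var b4 sqrt_n \<open>sqrt (real n) \<le> real n * p\<close> zero_le_power2[of T] by linarith
  qed
  have "real n / 4 * (1 - p) * (1/2) \<le> real n / 4 * (1 - p) * p"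
    using p p_half by (intro mult_left_mono) auto
  then have "real n * (1 - p) / 8 \<le> real n / 4 * (p * (1 - p))" by (simp add: mult_ac)
  moreover have "real (b + m) * (1 - p) \<le> real n * (1 - p)"
    using n p by (intro mult_right_mono) auto
  ultimately have small: "real (b + m) * (1 - p) < 8 * T\<^sup>2" using var b4 by linarith
  have large: "32 * T\<^sup>2 \<le> real m - 1" using cm cn unfolding T_def by linarith
  have "0 < T\<^sup>2" unfolding T_def using sd_threshold_ge by simp
  then have m1: "0 < real m - 1" using large by linarith
  have "4 * (real (b + m) * (1 - p)) \<le> real m - 1" using small large by linarith
  then have "real (b + m) * (1 - p) / (real m - 1) \<le> 1/4" using m1 by (simp add: pos_divide_le_eq)
  moreover have "2 \<le> m" using m1 by simp
  ultimately show ?thesis using bin_lead2_ge_markov[OF p01, of m b] by linarith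
qed

lemma bin_lead2_ge:
  fixes p c :: real and b m n :: nat
  assumes p: "0 < p" "p \<le> 1" and c: "0 < c" "c \<le> 1" and n: "n \<le> 4 * b" "b + m \<le> n"
    and cm: "c * sqrt (real n) \<le> real m" and cn: "32 * sd_threshold\<^sup>2 + 1 \<le> c * sqrt (real n)"
    and pn: "1 \<le> p * sqrt (real n)" and pcn: "sd_threshold \<le> p * c * sqrt (real n)"
  shows "1/2 + tie_const / 2 * c * sqrt p \<le> bin_lead2 p (b + m) b"
proof (cases "sd_threshold \<le> bin_sd p b")
  case True
  then show ?thesis using n by (intro bin_lead2_ge_large_sd[OF p c _ _ cm pcn]) auto
next
  case False
  have "tie_const / 2 * c * sqrt p \<le> 1/4"
  proof -
    have "c * sqrt p \<le> 1" using c p by (simp add: mult_le_one)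
    moreover have "exp (- 60) \<le> (1::real)" by simp
    then have "tie_const / 2 \<le> 1/4" unfolding tie_const_def by linarith
    moreover have "0 \<le> c * sqrt p" using c p by simp
    ultimately show ?thesis using tie_const_pos mult_mono[of "tie_const / 2" "1/4" "c * sqrt p" 1]
      by (simp add: mult.assoc)
  qed
  then show ?thesis using bin_lead2_ge_small_sd[OF p c n cm cn pn] False by simp
qed

section \<open>Random subsets and G(n,p)\<close>

(* subset_exp p A g is the expectation of g on a random subset of A that contains each
   element independently with probability p; for A = pairs n this is G(n,p), see
   gnp_sum_eq_subset_exp. *)

definition subset_prob :: "real \<Rightarrow> 'a set \<Rightarrow> 'a set \<Rightarrow> real" where
  "subset_prob p A T = p ^ card T * (1 - p) ^ (card A - card T)"

definition subset_exp :: "real \<Rightarrow> 'a set \<Rightarrow> ('a set \<Rightarrow> real) \<Rightarrow> real" where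
  "subset_exp p A g = (\<Sum>T\<in>Pow A. subset_prob p A T * g T)"

lemma subset_exp_cong: "(\<And>T. T \<subseteq> A \<Longrightarrow> g T = g' T) \<Longrightarrow> subset_exp p A g = subset_exp p A g'"
  unfolding subset_exp_def by (rule sum.cong) auto

lemma subset_exp_empty [simp]: "subset_exp p {} g = g {}"
  unfolding subset_exp_def subset_prob_def by simp

lemma subset_exp_insert:
  assumes A: "finite A" and x: "x \<notin> A"
  shows "subset_exp p (insert x A) g = subset_exp p A (\<lambda>T. (1 - p) * g T + p * g (insert x T))"
proof -
  have cA: "card (insert x A) = Suc (card A)" using A x by simp
  have out: "subset_prob p (insert x A) T = (1 - p) * subset_prob p A T" if "T \<subseteq> A" for T
  proof -
    have "card T \<le> card A" using that A by (simp add: card_mono)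
    then show ?thesis unfolding subset_prob_def cA by (simp add: Suc_diff_le)
  qed
  have into: "subset_prob p (insert x A) (insert x T) = p * subset_prob p A T" if "T \<subseteq> A" for T
  proof -
    have "finite T" "x \<notin> T" using that A x finite_subset by auto
    then have "card (insert x T) = Suc (card T)" by simp
    then show ?thesis unfolding subset_prob_def cA by simp
  qed
  have "subset_exp p (insert x A) g
      = (\<Sum>T\<in>Pow A. subset_prob p (insert x A) T * g T)
      + (\<Sum>T\<in>insert x ` Pow A. subset_prob p (insert x A) T * g T)"
    unfolding subset_exp_def Pow_insert using A x by (intro sum.union_disjoint) auto
  also have "(\<Sum>T\<in>insert x ` Pow A. subset_prob p (insert x A) T * g T)
      = (\<Sum>T\<in>Pow A. subset_prob p (insert x A) (insert x T) * g (insert x T))"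
    using x by (intro sum.reindex_cong[of "insert x"]) (auto simp: inj_on_def)
  also have "\<dots> = (\<Sum>T\<in>Pow A. p * subset_prob p A T * g (insert x T))"
    by (rule sum.cong) (auto simp: into)
  also have "(\<Sum>T\<in>Pow A. subset_prob p (insert x A) T * g T) = (\<Sum>T\<in>Pow A. (1 - p) * subset_prob p A T * g T)"
    by (rule sum.cong) (auto simp: out)
  finally show ?thesis unfolding subset_exp_def by (simp add: sum.distrib[symmetric] algebra_simps)
qed

lemma subset_exp_add: "subset_exp p A (\<lambda>T. f T + g T) = subset_exp p A f + subset_exp p A g"
  unfolding subset_exp_def by (simp add: sum.distrib algebra_simps)

lemma subset_exp_cmult: "subset_exp p A (\<lambda>T. c * f T) = c * subset_exp p A f"
  unfolding subset_exp_def by (simp add: sum_distrib_left algebra_simps)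

lemma subset_exp_mono:
  "0 \<le> p \<Longrightarrow> p \<le> 1 \<Longrightarrow> (\<And>T. T \<subseteq> A \<Longrightarrow> f T \<le> g T) \<Longrightarrow> subset_exp p A f \<le> subset_exp p A g"
  unfolding subset_exp_def subset_prob_def by (intro sum_mono mult_left_mono) auto

lemma subset_exp_const [simp]: "finite A \<Longrightarrow> subset_exp p A (\<lambda>_. c) = c"
  by (induction A rule: finite_induct) (simp_all add: subset_exp_insert algebra_simps)

lemma subset_exp_card: "finite A \<Longrightarrow> subset_exp p A (\<lambda>T. f (card T)) = bin_exp p (card A) f"
proof (induction A arbitrary: f rule: finite_induct)
  case empty
  then show ?case by (simp add: bin_exp_def bin_pmf_def)
next
  case (insert x A f)
  have "subset_exp p (insert x A) (\<lambda>T. f (card T))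
      = subset_exp p A (\<lambda>T. (1 - p) * f (card T) + p * f (card (insert x T)))"
    using insert.hyps by (rule subset_exp_insert)
  also have "\<dots> = subset_exp p A (\<lambda>T. (1 - p) * f (card T) + p * f (Suc (card T)))"
  proof (rule subset_exp_cong)
    fix T assume "T \<subseteq> A"
    then have "card (insert x T) = Suc (card T)"
      using insert by (meson card_insert_disjoint finite_subset subsetD)
    then show "(1 - p) * f (card T) + p * f (card (insert x T)) = (1 - p) * f (card T) + p * f (Suc (card T))"
      by simp
  qed
  also have "\<dots> = (1 - p) * bin_exp p (card A) f + p * bin_exp p (card A) (\<lambda>i. f (Suc i))"
    using insert.IH[of f] insert.IH[of "\<lambda>i. f (Suc i)"] by (simp add: subset_exp_add subset_exp_cmult)
  also have "\<dots> = bin_exp p (card (insert x A)) f"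
    using insert by (simp add: bin_exp_Suc algebra_simps)
  finally show ?case .
qed

lemma subset_exp_union:
  assumes "finite A" "finite B" "A \<inter> B = {}"
  shows "subset_exp p (A \<union> B) g = subset_exp p A (\<lambda>X. subset_exp p B (\<lambda>Y. g (X \<union> Y)))"
  using assms(2,1,3)
proof (induction B arbitrary: g rule: finite_induct)
  case (insert x B g)
  have "subset_exp p (A \<union> insert x B) g = subset_exp p (insert x (A \<union> B)) g" by simp
  also have "\<dots> = subset_exp p (A \<union> B) (\<lambda>T. (1 - p) * g T + p * g (insert x T))"
    using insert by (intro subset_exp_insert) auto
  also have "\<dots> = subset_exp p A (\<lambda>X. subset_exp p B (\<lambda>Y. (1 - p) * g (X \<union> Y) + p * g (insert x (X \<union> Y))))"
    using insert by (intro insert.IH) auto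
  also have "\<dots> = subset_exp p A (\<lambda>X. subset_exp p (insert x B) (\<lambda>Y. g (X \<union> Y)))"
    using insert by (intro subset_exp_cong) (simp add: subset_exp_insert)
  finally show ?case .
qed simp

lemma subset_exp_image:
  assumes "finite A" "inj_on f A"
  shows "subset_exp p (f ` A) g = subset_exp p A (\<lambda>T. g (f ` T))"
  using assms
proof (induction A arbitrary: g rule: finite_induct)
  case (insert x A g)
  then have "f x \<notin> f ` A" by auto
  with insert show ?case by (simp add: subset_exp_insert)
qed simp

lemma subset_exp_indicator:
  assumes "finite A" "B \<subseteq> A"
  shows "subset_exp p A (\<lambda>X. if X = B then c else 0) = subset_prob p A B * c"
  unfolding subset_exp_def using assms by (simp add: if_distrib sum.delta cong: if_cong)

lemma sum_sign_eq_card_diff: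
  fixes \<sigma> :: "'a \<Rightarrow> int"
  assumes "finite W" "\<forall>w\<in>W. \<sigma> w \<in> {-1, 1}"
  shows "(\<Sum>w\<in>W. \<sigma> w) = int (card {w\<in>W. \<sigma> w = 1}) - int (card {w\<in>W. \<sigma> w = -1})"
proof -
  define P where "P = {w\<in>W. \<sigma> w = 1}"
  define M where "M = {w\<in>W. \<sigma> w = -1}"
  have "W = P \<union> M" "P \<inter> M = {}" "finite P" "finite M"
    unfolding P_def M_def using assms by auto
  then have "(\<Sum>w\<in>W. \<sigma> w) = (\<Sum>w\<in>P. \<sigma> w) + (\<Sum>w\<in>M. \<sigma> w)" by (simp add: sum.union_disjoint)
  moreover have "(\<Sum>w\<in>P. \<sigma> w) = (\<Sum>w\<in>P. 1)" "(\<Sum>w\<in>M. \<sigma> w) = (\<Sum>w\<in>M. -1)"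
    unfolding P_def M_def by (auto intro: sum.cong)
  ultimately show ?thesis unfolding P_def M_def by simp
qed

lemma subset_exp_sign_sum_ge_2:
  fixes \<sigma> :: "'a \<Rightarrow> int"
  assumes W: "finite W" and \<sigma>: "\<forall>w\<in>W. \<sigma> w \<in> {-1, 1}"
  shows "subset_exp p W (\<lambda>T. if 2 \<le> (\<Sum>w\<in>T. \<sigma> w) then 1 else 0)
    = bin_lead2 p (card {w\<in>W. \<sigma> w = 1}) (card {w\<in>W. \<sigma> w = -1})"
proof -
  define Wp where "Wp = {w\<in>W. \<sigma> w = 1}"
  define Wm where "Wm = {w\<in>W. \<sigma> w = -1}"
  have fin: "finite Wp" "finite Wm" and "Wp \<inter> Wm = {}" and W_eq: "W = Wp \<union> Wm"
    unfolding Wp_def Wm_def using W \<sigma> by auto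
  have sum_eq: "(\<Sum>w\<in>X \<union> Y. \<sigma> w) = int (card X) - int (card Y)" if "X \<subseteq> Wp" "Y \<subseteq> Wm" for X Y
  proof -
    have "{w \<in> X \<union> Y. \<sigma> w = 1} = X" "{w \<in> X \<union> Y. \<sigma> w = -1} = Y"
      using that unfolding Wp_def Wm_def by auto
    moreover have "finite (X \<union> Y)" using that fin finite_subset by blast
    ultimately show ?thesis using sum_sign_eq_card_diff[of "X \<union> Y" \<sigma>] that \<sigma> W_eq by auto
  qed
  have "subset_exp p W (\<lambda>T. if 2 \<le> (\<Sum>w\<in>T. \<sigma> w) then 1 else 0)
      = subset_exp p Wp (\<lambda>X. subset_exp p Wm (\<lambda>Y. if 2 \<le> (\<Sum>w\<in>X \<union> Y. \<sigma> w) then 1 else 0))"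
    unfolding W_eq using fin \<open>Wp \<inter> Wm = {}\<close> by (rule subset_exp_union)
  also have "\<dots> = subset_exp p Wp (\<lambda>X. subset_exp p Wm (\<lambda>Y. (\<lambda>j. if j + 2 \<le> card X then 1 else 0) (card Y)))"
    using sum_eq by (intro subset_exp_cong) auto
  also have "\<dots> = subset_exp p Wp (\<lambda>X. (\<lambda>i. bin_exp p (card Wm) (\<lambda>j. if j + 2 \<le> i then 1 else 0)) (card X))"
    using fin by (intro subset_exp_cong) (rule subset_exp_card)
  also have "\<dots> = bin_lead2 p (card Wp) (card Wm)"
    unfolding bin_lead2_def
    using subset_exp_card[OF fin(1), of p "\<lambda>i. bin_exp p (card Wm) (\<lambda>j. if j + 2 \<le> i then 1 else 0)"]
    by simp
  finally show ?thesis unfolding Wp_def Wm_def .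
qed

lemma finite_pairs: "finite (pairs n)"
proof -
  have "pairs n \<subseteq> Pow (Vn n)" unfolding pairs_def by auto
  moreover have "finite (Pow (Vn n))" unfolding Vn_def by simp
  ultimately show ?thesis by (rule finite_subset)
qed

lemma gnp_prob_eq_subset_prob: "gnp_prob n p E = subset_prob p (pairs n) E"
  unfolding gnp_prob_def subset_prob_def ..

lemma gnp_sum_eq_subset_exp:
  "(\<Sum>E\<in>{E\<in>graphs n. A E}. gnp_prob n p E * h E) = subset_exp p (pairs n) (\<lambda>E. if A E then h E else 0)"
proof -
  have "(\<Sum>E\<in>{E\<in>graphs n. A E}. gnp_prob n p E * h E)
      = (\<Sum>E\<in>Pow (pairs n). if A E then gnp_prob n p E * h E else 0)"
  proof -
    have "{E\<in>graphs n. A E} = {E \<in> Pow (pairs n). A E}" unfolding graphs_def by simp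
    then show ?thesis using sum.inter_filter[of "Pow (pairs n)" "\<lambda>E. gnp_prob n p E * h E" A] finite_pairs by simp
  qed
  also have "\<dots> = subset_exp p (pairs n) (\<lambda>E. if A E then h E else 0)"
    unfolding subset_exp_def gnp_prob_eq_subset_prob by (rule sum.cong) auto
  finally show ?thesis .
qed

lemma doubleton_in_pairs: "{a, b} \<in> pairs n \<longleftrightarrow> a \<in> Vn n \<and> b \<in> Vn n \<and> a \<noteq> b"
  unfolding pairs_def by (auto simp: doubleton_eq_iff)

lemma state_1_eq_1:
  fixes \<sigma>0 :: "nat \<Rightarrow> int"
  assumes T: "finite T" "v \<notin> T" and s: "2 \<le> (\<Sum>w\<in>T. \<sigma>0 w)" and sv1: "\<sigma>0 v \<in> {-1, 1}"
    and N: "nbhd E u = insert v T"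
  shows "state E \<sigma>0 1 u = 1"
proof -
  have "(\<Sum>w\<in>nbhd E u. \<sigma>0 w) = \<sigma>0 v + (\<Sum>w\<in>T. \<sigma>0 w)" unfolding N using T by simp
  then have "(\<Sum>w\<in>nbhd E u. \<sigma>0 w) > 0" using s sv1 by auto
  then show ?thesis unfolding state_def maj_step_def by (simp add: Let_def)
qed

context
  fixes n :: nat and u v :: nat and \<Gamma> :: "nat set"
  assumes v: "v \<in> Vn n" and \<Gamma>: "\<Gamma> \<subseteq> Vn n - {v}" and u: "u \<in> \<Gamma>"
begin

(* The pairs split into three independent blocks: the edges at v, the edges from u to
   the vertices other than u and v, and all remaining pairs. *)

definition edges_v :: "nat set set" where "edges_v = (\<lambda>x. {v, x}) ` (Vn n - {v})"
definition other_vertices :: "nat set" where "other_vertices = Vn n - {u, v}"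
definition edges_u :: "nat set set" where "edges_u = (\<lambda>w. {u, w}) ` other_vertices"
definition edges_rest :: "nat set set" where "edges_rest = pairs n - edges_v - edges_u"
definition edges_v_to :: "nat set set" where "edges_v_to = (\<lambda>x. {v, x}) ` \<Gamma>"

lemma u_ne_v: "u \<noteq> v" and u_in_Vn: "u \<in> Vn n"
  using u \<Gamma> by auto

lemma finite_blocks: "finite edges_v" "finite edges_u" "finite edges_rest" "finite other_vertices"
  unfolding edges_v_def edges_u_def edges_rest_def other_vertices_def Vn_def using finite_pairs by auto

lemma edges_v_subset: "edges_v \<subseteq> pairs n"
  unfolding edges_v_def using v by (auto simp: doubleton_in_pairs)
lemma edges_u_subset: "edges_u \<subseteq> pairs n"
  unfolding edges_u_def other_vertices_def using u_ne_v u_in_Vn by (auto simp: doubleton_in_pairs)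

lemma edges_v_disjoint: "edges_v \<inter> (edges_u \<union> edges_rest) = {}"
  unfolding edges_v_def edges_u_def edges_rest_def other_vertices_def using u_ne_v u_in_Vn
  by (auto simp: doubleton_eq_iff)

lemma edges_u_disjoint: "edges_u \<inter> edges_rest = {}" unfolding edges_rest_def by auto

lemma pairs_eq_blocks: "pairs n = edges_v \<union> (edges_u \<union> edges_rest)"
  using edges_v_subset edges_u_subset unfolding edges_rest_def by auto

lemma edges_v_to_subset: "edges_v_to \<subseteq> edges_v" unfolding edges_v_to_def edges_v_def using \<Gamma> by auto

lemma edge_at_v_in_edges_v: "{v, w} \<in> pairs n \<Longrightarrow> {v, w} \<in> edges_v"
  unfolding edges_v_def by (auto simp: doubleton_in_pairs)

lemma nbhd_v_eq_iff:
  assumes X: "X \<subseteq> edges_v" and Y: "Y \<subseteq> edges_u" and Z: "Z \<subseteq> edges_rest"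
  shows "nbhd (X \<union> (Y \<union> Z)) v = \<Gamma> \<longleftrightarrow> X = edges_v_to"
proof -
  have "{v, w} \<notin> Y \<union> Z" for w
    using Y Z edges_v_disjoint pairs_eq_blocks edge_at_v_in_edges_v[of w] by blast
  then have nbhd_eq: "nbhd (X \<union> (Y \<union> Z)) v = nbhd X v" unfolding nbhd_def by auto
  have "X = (\<lambda>x. {v, x}) ` nbhd X v" using X unfolding edges_v_def nbhd_def by auto
  moreover have "nbhd edges_v_to v = \<Gamma>"
    unfolding nbhd_def edges_v_to_def using \<Gamma> by (auto simp: doubleton_eq_iff)
  ultimately show ?thesis unfolding nbhd_eq edges_v_to_def by auto
qed

lemma nbhd_u_eq:
  assumes Y: "Y \<subseteq> edges_u" and Z: "Z \<subseteq> edges_rest"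
  shows "nbhd (edges_v_to \<union> (Y \<union> Z)) u = insert v (nbhd Y u)"
proof -
  have "{u, w} \<in> edges_v_to \<longleftrightarrow> w = v" for w
    unfolding edges_v_to_def using u u_ne_v u_in_Vn by (auto simp: doubleton_eq_iff)
  moreover have "{u, w} \<notin> Z" for w
  proof
    assume "{u, w} \<in> Z"
    then have "{u, w} \<in> pairs n" "{u, w} \<notin> edges_v" "{u, w} \<notin> edges_u"
      using Z unfolding edges_rest_def by auto
    then show False
      using edge_at_v_in_edges_v[of u] unfolding edges_u_def other_vertices_def
      by (auto simp: doubleton_in_pairs insert_commute)
  qed
  ultimately show ?thesis unfolding nbhd_def by auto
qed

lemma nbhd_edges_u_subset: "Y \<subseteq> edges_u \<Longrightarrow> nbhd Y u \<subseteq> other_vertices"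
  unfolding nbhd_def edges_u_def other_vertices_def using u_ne_v u_in_Vn by (auto simp: doubleton_eq_iff)

lemma nbhd_edges_u_image: "T \<subseteq> other_vertices \<Longrightarrow> nbhd ((\<lambda>w. {u, w}) ` T) u = T"
  unfolding nbhd_def other_vertices_def by (auto simp: doubleton_eq_iff)

lemma inj_on_edges_u: "inj_on (\<lambda>w. {u, w}) other_vertices"
  unfolding inj_on_def other_vertices_def by (auto simp: doubleton_eq_iff)

lemma subset_exp_pairs_split:
  "subset_exp p (pairs n) g
    = subset_exp p edges_v (\<lambda>X. subset_exp p edges_u (\<lambda>Y. subset_exp p edges_rest (\<lambda>Z. g (X \<union> (Y \<union> Z)))))"
proof -
  have "subset_exp p (pairs n) g = subset_exp p edges_v (\<lambda>X. subset_exp p (edges_u \<union> edges_rest) (\<lambda>W. g (X \<union> W)))"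
    unfolding pairs_eq_blocks using finite_blocks edges_v_disjoint by (intro subset_exp_union) auto
  also have "\<dots> = subset_exp p edges_v (\<lambda>X. subset_exp p edges_u (\<lambda>Y. subset_exp p edges_rest (\<lambda>Z. g (X \<union> (Y \<union> Z)))))"
    using finite_blocks edges_u_disjoint by (intro subset_exp_cong subset_exp_union) auto
  finally show ?thesis .
qed

lemma prob_nbhd_v_eq:
  "subset_exp p (pairs n) (\<lambda>E. if nbhd E v = \<Gamma> then 1 else 0) = subset_prob p edges_v edges_v_to"
proof -
  have "subset_exp p edges_u (\<lambda>Y. subset_exp p edges_rest (\<lambda>Z. if nbhd (X \<union> (Y \<union> Z)) v = \<Gamma> then 1 else 0))
      = (if X = edges_v_to then 1 else 0)" if X: "X \<subseteq> edges_v" for X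
  proof -
    have "subset_exp p edges_u (\<lambda>Y. subset_exp p edges_rest (\<lambda>Z. if nbhd (X \<union> (Y \<union> Z)) v = \<Gamma> then 1 else 0))
        = subset_exp p edges_u (\<lambda>Y. subset_exp p edges_rest (\<lambda>Z. if X = edges_v_to then 1 else 0))"
      using nbhd_v_eq_iff[OF X] by (intro subset_exp_cong) auto
    then show ?thesis using finite_blocks by simp
  qed
  then have "subset_exp p (pairs n) (\<lambda>E. if nbhd E v = \<Gamma> then 1 else 0)
      = subset_exp p edges_v (\<lambda>X. if X = edges_v_to then 1 else 0)"
    unfolding subset_exp_pairs_split by (rule subset_exp_cong)
  then show ?thesis using subset_exp_indicator[OF finite_blocks(1) edges_v_to_subset] by simp
qed

lemma subset_exp_nbhd_u:
  "subset_exp p edges_u (\<lambda>Y. k (nbhd Y u)) = subset_exp p other_vertices k"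
proof -
  have "subset_exp p edges_u (\<lambda>Y. k (nbhd Y u))
      = subset_exp p other_vertices (\<lambda>T. k (nbhd ((\<lambda>w. {u, w}) ` T) u))"
    unfolding edges_u_def using finite_blocks inj_on_edges_u by (intro subset_exp_image) auto
  also have "\<dots> = subset_exp p other_vertices k"
    by (intro subset_exp_cong) (simp add: nbhd_edges_u_image)
  finally show ?thesis .
qed

lemma state_1_if_lead2:
  fixes \<sigma>0 :: "nat \<Rightarrow> int"
  assumes \<sigma>0: "\<sigma>0 v \<in> {-1, 1}" and Y: "Y \<subseteq> edges_u" and Z: "Z \<subseteq> edges_rest"
    and lead: "2 \<le> (\<Sum>w\<in>nbhd Y u. \<sigma>0 w)"
  shows "state (edges_v_to \<union> (Y \<union> Z)) \<sigma>0 1 u = 1"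
proof (rule state_1_eq_1[OF _ _ lead \<sigma>0 nbhd_u_eq[OF Y Z]])
  show "finite (nbhd Y u)" using nbhd_edges_u_subset[OF Y] finite_blocks finite_subset by blast
  show "v \<notin> nbhd Y u" using nbhd_edges_u_subset[OF Y] unfolding other_vertices_def by auto
qed

lemma prob_nbhd_v_state_ge:
  fixes \<sigma>0 :: "nat \<Rightarrow> int"
  assumes p: "0 \<le> p" "p \<le> 1" and \<sigma>0: "\<sigma>0 v \<in> {-1, 1}"
  shows "subset_prob p edges_v edges_v_to * subset_exp p other_vertices (\<lambda>T. if 2 \<le> (\<Sum>w\<in>T. \<sigma>0 w) then 1 else 0)
    \<le> subset_exp p (pairs n) (\<lambda>E. if nbhd E v = \<Gamma> then (if state E \<sigma>0 1 u = 1 then 1 else 0) else 0)"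
proof -
  define k where "k T = (if 2 \<le> (\<Sum>w\<in>T. \<sigma>0 w) then 1 else (0::real))" for T
  define f where "f E = (if nbhd E v = \<Gamma> then (if state E \<sigma>0 1 u = 1 then 1 else 0) else (0::real))" for E
  have f_nonneg: "0 \<le> subset_exp p B g" if "\<And>T. 0 \<le> g T" for B and g :: "nat set set \<Rightarrow> real"
    using subset_exp_mono[OF p, of B "\<lambda>_. 0" g] that by (simp add: subset_exp_def)
  have "(if X = edges_v_to then subset_exp p other_vertices k else 0)
      \<le> subset_exp p edges_u (\<lambda>Y. subset_exp p edges_rest (\<lambda>Z. f (X \<union> (Y \<union> Z))))"
    if X: "X \<subseteq> edges_v" for X
  proof (cases "X = edges_v_to")
    case True
    have "subset_exp p other_vertices k
        = subset_exp p edges_u (\<lambda>Y. subset_exp p edges_rest (\<lambda>Z. k (nbhd Y u)))"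
      using finite_blocks by (simp add: subset_exp_nbhd_u)
    also have "\<dots> \<le> subset_exp p edges_u (\<lambda>Y. subset_exp p edges_rest (\<lambda>Z. f (X \<union> (Y \<union> Z))))"
      using nbhd_v_eq_iff[OF X] state_1_if_lead2[of \<sigma>0] \<sigma>0 True
      by (intro subset_exp_mono p) (simp add: k_def f_def)
    finally show ?thesis using True by simp
  qed (simp add: f_nonneg f_def)
  then have "subset_exp p edges_v (\<lambda>X. if X = edges_v_to then subset_exp p other_vertices k else 0)
      \<le> subset_exp p (pairs n) f"
    unfolding subset_exp_pairs_split by (intro subset_exp_mono p)
  then show ?thesis
    using subset_exp_indicator[OF finite_blocks(1) edges_v_to_subset] unfolding f_def k_def by simp
qed

end

lemma X2_eq_sum:
  "finite \<Gamma> \<Longrightarrow> nbhd E v = \<Gamma> \<Longrightarrow> X2 E \<sigma>0 v = (\<Sum>u\<in>\<Gamma>. if state E \<sigma>0 1 u = 1 then 1 else 0)"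
  unfolding X2_def by (simp add: sum.inter_filter[symmetric])

lemma cond_exp_X2_ge:
  fixes \<sigma>0 :: "nat \<Rightarrow> int"
  assumes v: "v \<in> Vn n" and \<Gamma>: "\<Gamma> \<subseteq> Vn n - {v}" and p: "0 \<le> p" "p \<le> 1"
    and \<sigma>0: "\<forall>w\<in>Vn n. \<sigma>0 w \<in> {-1, 1}" and pos: "0 < gnp_P n p (\<lambda>E. nbhd E v = \<Gamma>)"
  shows "(\<Sum>u\<in>\<Gamma>. bin_lead2 p (card {w\<in>Vn n - {u, v}. \<sigma>0 w = 1}) (card {w\<in>Vn n - {u, v}. \<sigma>0 w = -1}))
    \<le> gnp_cond_exp n p (\<lambda>E. X2 E \<sigma>0 v) (\<lambda>E. nbhd E v = \<Gamma>)"
proof -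
  define D where "D = gnp_P n p (\<lambda>E. nbhd E v = \<Gamma>)"
  define ind where "ind u E = (if state E \<sigma>0 1 u = 1 then 1 else (0::real))" for u E
  define lead where
    "lead u = bin_lead2 p (card {w\<in>Vn n - {u, v}. \<sigma>0 w = 1}) (card {w\<in>Vn n - {u, v}. \<sigma>0 w = -1})" for u
  have fin: "finite \<Gamma>" using \<Gamma> unfolding Vn_def by (auto intro: finite_subset)
  have "(\<Sum>E\<in>{E\<in>graphs n. nbhd E v = \<Gamma>}. gnp_prob n p E * X2 E \<sigma>0 v)
      = (\<Sum>E\<in>{E\<in>graphs n. nbhd E v = \<Gamma>}. \<Sum>u\<in>\<Gamma>. gnp_prob n p E * ind u E)"
    using fin by (intro sum.cong) (simp_all add: X2_eq_sum ind_def sum_distrib_left)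
  also have "\<dots> = (\<Sum>u\<in>\<Gamma>. subset_exp p (pairs n) (\<lambda>E. if nbhd E v = \<Gamma> then ind u E else 0))"
    by (simp add: sum.swap[of _ \<Gamma>] gnp_sum_eq_subset_exp)
  finally have numerator: "(\<Sum>E\<in>{E\<in>graphs n. nbhd E v = \<Gamma>}. gnp_prob n p E * X2 E \<sigma>0 v)
      = (\<Sum>u\<in>\<Gamma>. subset_exp p (pairs n) (\<lambda>E. if nbhd E v = \<Gamma> then ind u E else 0))" .
  have "D * lead u \<le> subset_exp p (pairs n) (\<lambda>E. if nbhd E v = \<Gamma> then ind u E else 0)" if u: "u \<in> \<Gamma>" for u
  proof -
    have "D = subset_prob p (edges_v n v) (edges_v_to v \<Gamma>)"
      using prob_nbhd_v_eq[OF v \<Gamma> u] gnp_sum_eq_subset_exp[where h="\<lambda>_. 1"] unfolding D_def gnp_P_def by simp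
    moreover have "lead u = subset_exp p (other_vertices n u v) (\<lambda>T. if 2 \<le> (\<Sum>w\<in>T. \<sigma>0 w) then 1 else 0)"
      unfolding lead_def other_vertices_def[OF v \<Gamma> u] using \<sigma>0
      by (intro subset_exp_sign_sum_ge_2[symmetric]) (auto simp: Vn_def)
    ultimately show ?thesis unfolding ind_def using prob_nbhd_v_state_ge[OF v \<Gamma> u p] v \<sigma>0 by simp
  qed
  then have "D * (\<Sum>u\<in>\<Gamma>. lead u) \<le> (\<Sum>E\<in>{E\<in>graphs n. nbhd E v = \<Gamma>}. gnp_prob n p E * X2 E \<sigma>0 v)"
    unfolding numerator sum_distrib_left by (rule sum_mono)
  then show ?thesis
    using pos unfolding gnp_cond_exp_def D_def[symmetric] lead_def by (simp add: pos_le_divide_eq mult.commute)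
qed

lemma phi_bounds: "x \<le> real_of_int (phi n x)" "real_of_int (phi n x) < x + 2"
proof -
  define k where "k = (if \<lceil>x\<rceil> mod 2 = int n mod 2 then \<lceil>x\<rceil> else \<lceil>x\<rceil> + 1)"
  have k_parity: "k mod 2 = int n mod 2" unfolding k_def by presburger
  have k: "x \<le> real_of_int k" "real_of_int k < x + 2"
    unfolding k_def using ceiling_correct[of x] by (split if_split; simp; linarith)+
  have least: "k \<le> j" if "x \<le> real_of_int j" "j mod 2 = int n mod 2" for j
  proof -
    have "\<lceil>x\<rceil> \<le> j" using that(1) by (simp add: ceiling_le_iff)
    moreover have "j \<noteq> \<lceil>x\<rceil>" if "\<lceil>x\<rceil> mod 2 \<noteq> int n mod 2" using that \<open>j mod 2 = int n mod 2\<close> by auto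
    ultimately show ?thesis unfolding k_def by auto
  qed
  have "phi n x = k"
    unfolding phi_def using k k_parity least by (intro the_equality) (auto intro: order_antisym)
  then show "x \<le> real_of_int (phi n x)" "real_of_int (phi n x) < x + 2" using k by simp_all
qed

lemma card_signs_off_pair:
  fixes \<sigma>0 :: "nat \<Rightarrow> int"
  assumes uv: "u \<in> Vn n" "v \<in> Vn n" "u \<noteq> v" and \<sigma>0: "\<forall>w\<in>Vn n. \<sigma>0 w \<in> {-1, 1}"
  defines "P \<equiv> card {w\<in>Vn n - {u, v}. \<sigma>0 w = 1}" and "M \<equiv> card {w\<in>Vn n - {u, v}. \<sigma>0 w = -1}"
  shows "P + M = n - 2" "\<bar>real P - real M - real_of_int (\<Sum>w\<in>Vn n. \<sigma>0 w)\<bar> \<le> 2"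
proof -
  define W where "W = Vn n - {u, v}"
  have fin: "finite W" unfolding W_def Vn_def by simp
  have "card W = n - 2" unfolding W_def using uv by (simp add: card_Diff_subset Vn_def)
  moreover have "card W = card {w\<in>W. \<sigma>0 w = 1} + card {w\<in>W. \<sigma>0 w = -1}"
  proof -
    have "W = {w\<in>W. \<sigma>0 w = 1} \<union> {w\<in>W. \<sigma>0 w = -1}" using \<sigma>0 unfolding W_def by auto
    moreover have "card ({w\<in>W. \<sigma>0 w = 1} \<union> {w\<in>W. \<sigma>0 w = -1})
        = card {w\<in>W. \<sigma>0 w = 1} + card {w\<in>W. \<sigma>0 w = -1}"
      using fin by (intro card_Un_disjoint) auto
    ultimately show ?thesis by simp
  qed
  ultimately show "P + M = n - 2" unfolding P_def M_def W_def by simp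
  have "Vn n = insert u (insert v W)" "u \<notin> insert v W" "v \<notin> W" unfolding W_def using uv by auto
  then have "(\<Sum>w\<in>Vn n. \<sigma>0 w) = \<sigma>0 u + \<sigma>0 v + (\<Sum>w\<in>W. \<sigma>0 w)" using fin by simp
  moreover have "(\<Sum>w\<in>W. \<sigma>0 w) = int P - int M"
    unfolding P_def M_def W_def[symmetric] using fin \<sigma>0 unfolding W_def by (intro sum_sign_eq_card_diff) auto
  moreover have "\<sigma>0 u \<in> {-1, 1}" "\<sigma>0 v \<in> {-1, 1}" using \<sigma>0 uv by auto
  ultimately show "\<bar>real P - real M - real_of_int (\<Sum>w\<in>Vn n. \<sigma>0 w)\<bar> \<le> 2" by auto
qed

lemma lead2_of_config_ge:
  fixes \<sigma>0 :: "nat \<Rightarrow> int" and c p :: real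
  assumes c: "0 < c" "c \<le> 1" and p: "0 < p" "p \<le> 1"
    and cn: "32 * sd_threshold\<^sup>2 + 1 \<le> c * sqrt (real n)" and pn: "1 \<le> p * sqrt (real n)"
    and pcn: "sd_threshold \<le> p * c * sqrt (real n)"
    and uv: "u \<in> Vn n" "v \<in> Vn n" "u \<noteq> v" and \<sigma>0: "\<forall>w\<in>Vn n. \<sigma>0 w \<in> {-1, 1}"
    and S: "2 * c * sqrt (real n) \<le> real_of_int (\<Sum>w\<in>Vn n. \<sigma>0 w)"
      "real_of_int (\<Sum>w\<in>Vn n. \<sigma>0 w) < 2 * c * sqrt (real n) + 2"
  shows "1/2 + tie_const / 2 * c * sqrt p
    \<le> bin_lead2 p (card {w\<in>Vn n - {u, v}. \<sigma>0 w = 1}) (card {w\<in>Vn n - {u, v}. \<sigma>0 w = -1})"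
proof -
  define P where "P = card {w\<in>Vn n - {u, v}. \<sigma>0 w = 1}"
  define M where "M = card {w\<in>Vn n - {u, v}. \<sigma>0 w = -1}"
  have PM: "P + M = n - 2" "\<bar>real P - real M - real_of_int (\<Sum>w\<in>Vn n. \<sigma>0 w)\<bar> \<le> 2"
    unfolding P_def M_def using card_signs_off_pair[OF uv \<sigma>0] by simp_all
  have "100 \<le> sd_threshold\<^sup>2" using sd_threshold_ge power_mono[of 10 sd_threshold 2] by simp
  then have c33: "33 \<le> c * sqrt (real n)" using cn by linarith
  have "c * sqrt (real n) \<le> sqrt (real n)" using c by (simp add: mult_left_le_one_le)
  then have n33: "33 \<le> sqrt (real n)" using c33 by linarith
  have "M \<le> P" using PM S c33 by linarith
  define m where "m = P - M"
  have m: "real m = real P - real M" "P = M + m" unfolding m_def using \<open>M \<le> P\<close> by simp_all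
  have cm: "c * sqrt (real n) \<le> real m" using m PM S c33 by linarith
  have "2 \<le> n" using uv unfolding Vn_def by auto
  then have n_eq: "real n = 2 * real M + real m + 2" using PM(1) m by simp
  have "33 * sqrt (real n) \<le> sqrt (real n) * sqrt (real n)"
    using n33 by (intro mult_right_mono) auto
  then have "4 * sqrt (real n) + 12 \<le> real n" using n33 by simp
  then have "n \<le> 4 * M" using n_eq m PM S \<open>c * sqrt (real n) \<le> sqrt (real n)\<close> by linarith
  moreover have "M + m \<le> n" using n_eq by linarith
  ultimately show ?thesis
    using bin_lead2_ge[OF p c _ _ cm cn pn pcn] unfolding P_def[symmetric] M_def[symmetric] m(2) by simp
qed

lemma powr_two_thirds_le_half:
  fixes d :: real
  assumes "8 \<le> d"
  shows "d powr (2/3) \<le> d / 2"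
proof -
  have "2 = (8::real) powr (1/3)" by (simp add: powr_numeral[symmetric] powr_powr)
  also have "\<dots> \<le> d powr (1/3)" using assms by (intro powr_mono2) auto
  finally have "2 * d powr (2/3) \<le> d powr (1/3) * d powr (2/3)" by (simp add: mult_right_mono)
  also have "\<dots> = d" using assms by (simp flip: powr_add)
  finally show ?thesis by simp
qed

lemma max_inv_sq_sq_ge:
  fixes \<beta> c :: real
  assumes c: "0 < c" "c \<le> 1" and \<beta>: "1 \<le> \<beta>"
  shows "1 \<le> max (1 / c\<^sup>2) (\<beta>\<^sup>2)" "\<beta> \<le> c * max (1 / c\<^sup>2) (\<beta>\<^sup>2)"
proof -
  have "c\<^sup>2 \<le> 1" using c by (simp add: power_le_one)
  then have "1 \<le> 1 / c\<^sup>2" using c by (simp add: le_divide_eq)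
  then show "1 \<le> max (1 / c\<^sup>2) (\<beta>\<^sup>2)" by (simp add: le_max_iff_disj)
  show "\<beta> \<le> c * max (1 / c\<^sup>2) (\<beta>\<^sup>2)"
  proof (cases "\<beta> * c \<le> 1")
    case True
    then have "\<beta> \<le> c * (1 / c\<^sup>2)" using c by (simp add: field_simps power2_eq_square)
    then show ?thesis using c by (smt (verit) max.cobounded1 mult_left_mono)
  next
    case False
    then have "\<beta> \<le> c * \<beta>\<^sup>2" using \<beta> by (simp add: power2_eq_square mult.commute)
    then show ?thesis using c by (smt (verit) max.cobounded2 mult_left_mono)
  qed
qed

lemma edge_density_bounds:
  fixes \<beta> c p :: real
  assumes \<beta>: "sd_threshold \<le> \<beta>" and c: "0 < c" "c \<le> 1" and n: "0 < n"
    and d: "max (1 / c\<^sup>2) (\<beta>\<^sup>2) * sqrt (real n) \<le> real n * p"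
  shows "0 < p" "1 \<le> p * sqrt (real n)" "sd_threshold \<le> p * c * sqrt (real n)"
    "sqrt (real n) \<le> real n * p"
proof -
  define lam where "lam = max (1 / c\<^sup>2) (\<beta>\<^sup>2)"
  have lam: "1 \<le> lam" "\<beta> \<le> c * lam"
    unfolding lam_def using max_inv_sq_sq_ge[OF c] \<beta> sd_threshold_ge by auto
  have "real n * p = (p * sqrt (real n)) * sqrt (real n)" by (simp add: mult.assoc mult.commute)
  then have "lam * sqrt (real n) \<le> (p * sqrt (real n)) * sqrt (real n)"
    using d unfolding lam_def by metis
  then have pn: "lam \<le> p * sqrt (real n)" by (rule mult_right_le_imp_le) (use n in simp)
  then show "1 \<le> p * sqrt (real n)" using lam by linarith
  then have "0 < p * sqrt (real n)" by linarith
  then show "0 < p" by (simp add: zero_less_mult_iff)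
  have "c * lam \<le> c * (p * sqrt (real n))" using pn c by (intro mult_left_mono) auto
  then show "sd_threshold \<le> p * c * sqrt (real n)" using \<beta> lam by (simp add: mult_ac)
  have "sqrt (real n) \<le> lam * sqrt (real n)"
    using mult_right_mono[OF lam(1), of "sqrt (real n)"] by simp
  then show "sqrt (real n) \<le> real n * p" using d unfolding lam_def by linarith
qed

lemma cond_exp_X2_ge_card:
  fixes \<sigma>0 :: "nat \<Rightarrow> int" and c p :: real
  assumes c: "0 < c" "c \<le> 1" and p: "0 < p" "p \<le> 1"
    and cn: "32 * sd_threshold\<^sup>2 + 1 \<le> c * sqrt (real n)" and pn: "1 \<le> p * sqrt (real n)"
    and pcn: "sd_threshold \<le> p * c * sqrt (real n)"
    and v: "v \<in> Vn n" and \<sigma>0: "\<forall>u\<in>Vn n. \<sigma>0 u \<in> {-1, 1}"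
    and S: "(\<Sum>u\<in>Vn n. \<sigma>0 u) = phi n (2 * c * sqrt (real n))"
    and \<Gamma>: "\<Gamma> \<subseteq> Vn n - {v}" and pos: "0 < gnp_P n p (\<lambda>E. nbhd E v = \<Gamma>)"
  shows "real (card \<Gamma>) * (1/2 + tie_const / 2 * c * sqrt p)
    \<le> gnp_cond_exp n p (\<lambda>E. X2 E \<sigma>0 v) (\<lambda>E. nbhd E v = \<Gamma>)"
proof -
  have "1/2 + tie_const / 2 * c * sqrt p
      \<le> bin_lead2 p (card {w\<in>Vn n - {u, v}. \<sigma>0 w = 1}) (card {w\<in>Vn n - {u, v}. \<sigma>0 w = -1})"
    if "u \<in> \<Gamma>" for u
  proof (rule lead2_of_config_ge[OF c p cn pn pcn _ v _ \<sigma>0])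
    show "u \<in> Vn n" "u \<noteq> v" using that \<Gamma> by auto
  qed (use phi_bounds[where x = "2 * c * sqrt (real n)" and n = n] in \<open>simp_all add: S\<close>)
  then have "(\<Sum>u\<in>\<Gamma>. 1/2 + tie_const / 2 * c * sqrt p)
      \<le> (\<Sum>u\<in>\<Gamma>. bin_lead2 p (card {w\<in>Vn n - {u, v}. \<sigma>0 w = 1}) (card {w\<in>Vn n - {u, v}. \<sigma>0 w = -1}))"
    by (rule sum_mono)
  then show ?thesis using cond_exp_X2_ge[OF v \<Gamma> _ _ \<sigma>0 pos] p by simp
qed

lemma cond_exp_X2_lower_bound:
  fixes \<sigma>0 :: "nat \<Rightarrow> int" and \<beta> c p :: real
  assumes \<beta>: "sd_threshold \<le> \<beta>" and c: "0 < c" "c \<le> 1"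
    and cn: "32 * sd_threshold\<^sup>2 + 1 \<le> c * sqrt (real n)"
    and p: "0 \<le> p" "p \<le> 1" and d: "max (1 / c\<^sup>2) (\<beta>\<^sup>2) * sqrt (real n) \<le> real n * p"
    and v: "v \<in> Vn n" and \<sigma>0: "\<forall>u\<in>Vn n. \<sigma>0 u \<in> {-1, 1}"
    and S: "(\<Sum>u\<in>Vn n. \<sigma>0 u) = phi n (2 * c * sqrt (real n))"
    and \<Gamma>: "\<Gamma> \<subseteq> Vn n - {v}" and card: "\<bar>real (card \<Gamma>) - real n * p\<bar> \<le> (real n * p) powr (2/3)"
    and pos: "0 < gnp_P n p (\<lambda>E. nbhd E v = \<Gamma>)"
  shows "real (card \<Gamma>) / 2 + 7/4 * tie_const * c / 7 * sqrt ((real n * p) ^ 3 / real n)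
    \<le> gnp_cond_exp n p (\<lambda>E. X2 E \<sigma>0 v) (\<lambda>E. nbhd E v = \<Gamma>)"
proof -
  define gain where "gain = tie_const / 2 * c * sqrt p"
  have "100 \<le> sd_threshold\<^sup>2" using sd_threshold_ge power_mono[of 10 sd_threshold 2] by simp
  moreover have "c * sqrt (real n) \<le> sqrt (real n)" using c by (simp add: mult_left_le_one_le)
  ultimately have n: "33 \<le> sqrt (real n)" using cn by linarith
  then have "0 < n" by (cases n) auto
  note density = edge_density_bounds[OF \<beta> c this d]
  have "real (card \<Gamma>) * (1/2 + gain) \<le> gnp_cond_exp n p (\<lambda>E. X2 E \<sigma>0 v) (\<lambda>E. nbhd E v = \<Gamma>)"
    unfolding gain_def using density p by (intro cond_exp_X2_ge_card[OF c _ _ cn _ _ v \<sigma>0 S \<Gamma> pos]) auto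
  moreover have "real n * p / 2 \<le> real (card \<Gamma>)"
    using powr_two_thirds_le_half[of "real n * p"] card density(4) n by linarith
  moreover have "sqrt ((real n * p) ^ 3 / real n) = real n * p * sqrt p"
  proof -
    have "(real n * p) ^ 3 / real n = (real n * p)\<^sup>2 * p"
      using n by (simp add: power3_eq_cube power2_eq_square)
    then show ?thesis using p by (simp add: real_sqrt_mult)
  qed
  moreover have "0 \<le> gain" unfolding gain_def using tie_const_pos c p by simp
  ultimately show ?thesis
    using mult_right_mono[of "real n * p / 2" "real (card \<Gamma>)" gain] unfolding gain_def
    by (simp add: algebra_simps)
qed

lemma lower_bound_for_large_n:
  fixes \<beta> c :: real
  assumes \<beta>: "sd_threshold \<le> \<beta>" and c: "0 < c" "c \<le> 1"
  shows "\<exists>N::nat. \<forall>n\<ge>N. \<forall>p::real. 0 \<le> p \<and> p \<le> 1 \<and> real n * p \<ge> max (1 / c\<^sup>2) (\<beta>\<^sup>2) * sqrt (real n) \<longrightarrow>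
    (\<forall>v \<sigma>0 \<Gamma>. v \<in> Vn n \<longrightarrow>
      (\<forall>u\<in>Vn n. \<sigma>0 u \<in> {-1, 1}) \<longrightarrow>
      (\<Sum>u\<in>Vn n. \<sigma>0 u) = phi n (2 * c * sqrt (real n)) \<longrightarrow>
      \<Gamma> \<subseteq> Vn n - {v} \<longrightarrow>
      \<bar>real (card \<Gamma>) - real n * p\<bar> \<le> (real n * p) powr (2/3) \<longrightarrow>
      gnp_P n p (\<lambda>E. nbhd E v = \<Gamma>) > 0 \<longrightarrow>
      gnp_cond_exp n p (\<lambda>E. X2 E \<sigma>0 v) (\<lambda>E. nbhd E v = \<Gamma>)
        \<ge> real (card \<Gamma>) / 2 + 7/4 * tie_const * c / 7 * sqrt ((real n * p) ^ 3 / real n))"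
proof -
  define N where "N = nat \<lceil>((32 * sd_threshold\<^sup>2 + 1) / c)\<^sup>2\<rceil>"
  have "32 * sd_threshold\<^sup>2 + 1 \<le> c * sqrt (real n)" if "N \<le> n" for n
  proof -
    have "((32 * sd_threshold\<^sup>2 + 1) / c)\<^sup>2 \<le> real n" using that unfolding N_def by linarith
    moreover have "0 < 32 * sd_threshold\<^sup>2 + 1" using zero_le_power2[of sd_threshold] by linarith
    ultimately have "(32 * sd_threshold\<^sup>2 + 1) / c \<le> sqrt (real n)"
      using c by (simp add: real_le_rsqrt)
    then show ?thesis using c by (simp add: field_simps)
  qed
  then show ?thesis
    by (intro exI[of _ N] allI impI) (rule cond_exp_X2_lower_bound[OF \<beta> c]; simp)
qed

theorem lemma3p5:
  shows "\<exists>\<beta>0::real. \<forall>\<beta>\<ge>\<beta>0. \<exists>\<xi>::real. \<xi> > 0 \<and>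
    (\<forall>\<epsilon>::real. 0 < \<epsilon> \<and> \<epsilon> \<le> 1 \<longrightarrow>
      (let c = sqrt (2 * pi) * \<epsilon> / 20; lam = max (1 / c\<^sup>2) (\<beta>\<^sup>2) in
       \<exists>N::nat. \<forall>n\<ge>N. \<forall>p::real. 0 \<le> p \<and> p \<le> 1 \<and> real n * p \<ge> lam * sqrt (real n) \<longrightarrow>
         (let d = real n * p in
          \<forall>v \<sigma>0 \<Gamma>. v \<in> Vn n \<longrightarrow>
            (\<forall>u\<in>Vn n. \<sigma>0 u \<in> {-1, 1}) \<longrightarrow>
            (\<Sum>u\<in>Vn n. \<sigma>0 u) = phi n (2 * c * sqrt (real n)) \<longrightarrow>
            \<Gamma> \<subseteq> Vn n - {v} \<longrightarrow>
            \<bar>real (card \<Gamma>) - d\<bar> \<le> d powr (2/3) \<longrightarrow>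
            gnp_P n p (\<lambda>E. nbhd E v = \<Gamma>) > 0 \<longrightarrow>
            gnp_cond_exp n p (\<lambda>E. X2 E \<sigma>0 v) (\<lambda>E. nbhd E v = \<Gamma>)
              \<ge> real (card \<Gamma>) / 2 + \<xi> * c / 7 * sqrt (d ^ 3 / real n))))"
proof -
  have c: "0 < sqrt (2 * pi) * \<epsilon> / 20" "sqrt (2 * pi) * \<epsilon> / 20 \<le> 1" if "0 < \<epsilon>" "\<epsilon> \<le> 1" for \<epsilon> :: real
  proof -
    have "sqrt (2 * pi) \<le> sqrt (20\<^sup>2)" using pi_less_4 by (intro real_sqrt_le_mono) simp
    then show "0 < sqrt (2 * pi) * \<epsilon> / 20" "sqrt (2 * pi) * \<epsilon> / 20 \<le> 1"
      using that mult_mono[of "sqrt (2 * pi)" 20 \<epsilon> 1] by simp_all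
  qed
  show ?thesis
    unfolding Let_def
  proof (rule exI[of _ sd_threshold], intro allI impI,
      rule exI[of _ "7/4 * tie_const"], intro conjI allI impI)
    show "0 < 7/4 * tie_const" using tie_const_pos by simp
  qed (rule lower_bound_for_large_n; use c in auto)
qed

end
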